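(* Let $D^p$ be a PDB instance with $D^p\models\mathcal{IC}$, and assume $HG(D^p,\mathcal{IC})$ is the chain $\mathcal{C}=e_1,\dots,e_n$ with $n>1$. Let $\tilde\beta_1\subseteq\beta_1$ and $\tilde\beta_n\subseteq\beta_n$, where $\beta_1,\beta_n$ are the ears of $e_1$ and $e_n$. Then $$p^{\min}_{\mathcal{C}}(\tilde\beta_1\cup\tilde\beta_n)=\max\Big\{0,\ p^{\min}_\emptyset(\tilde\beta_1)+p^{\min}_\emptyset(\tilde\beta_n)-\big[1-p^{\min}_{sub(\mathcal{C})}(\alpha_1\cup(\beta_1\setminus\tilde\beta_1)\cup\alpha_{n-1}\cup(\beta_n\setminus\tilde\beta_n))\big]\Big\},$$ where $p^{\min}_{sub(\mathcal{C})}(\alpha_1\cup(\beta_1\setminus\tilde\beta_1)\cup\alpha_{n-1}\cup(\beta_n\setminus\tilde\beta_n))=\max\{0,\ p^{\min}_{sub(\mathcal{C})}(\alpha_1\cup\alpha_{n-1})+p^{\min}_\emptyset((\beta_1\setminus\tilde\beta_1)\cup(\beta_n\setminus\tilde\beta_n))-1\}$, and for any set of tuples $\gamma$, $p^{\min}_\emptyset(\gamma)=\max\{0,\sum_{t\in\gamma}p(t)-|\gamma|+1\}$.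
   Context: A PDB instance $D^p$ is a finite set of tuples, each with a probability $p(t)\in[0,1]$; possible worlds are subsets of its tuples; an interpretation is a probability distribution on possible worlds such that the total probability of worlds containing $t$ is $p(t)$. For a set $\mathcal{IC}$ of denial constraints, a model is an interpretation giving probability $0$ to worlds violating $\mathcal{IC}$; $D^p\models\mathcal{IC}$ iff a model exists. The conflict hypergraph $HG(D^p,\mathcal{IC})$ has the tuples as nodes and, as hyperedges, the minimal sets of tuples $T$ such that every world containing $T$ violates $\mathcal{IC}$. For a set $H$ of hyperedges (sets of tuples) and a set of tuples $X$, $p^{\min}_H(X)$ is the minimum, over all interpretations of $D^p$ that assign probability $0$ to every world containing all nodes of some hyperedge of $H$, of the total probability of the worlds containing all tuples of $X$. A chain is a hypergraph whose hyperedges form a sequence $e_1,\dots,e_n$ in which two hyperedges intersect iff they are consecutive. For a chain, $\alpha_i=e_i\cap e_{i+1}$ ($i\in[1..n-1]$), $\beta_i$ is the set of ears of $e_i$ (nodes belonging to no other hyperedge), and $sub(\mathcal{C})$ is the set of hyperedges $e_2,\dots,e_{n-1}$. *)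

theory Defs
  imports Complex_Main
begin

definition pdb :: "'a set \<Rightarrow> ('a \<Rightarrow> real) \<Rightarrow> bool" where
  "pdb T p \<longleftrightarrow> finite T \<and> (\<forall>t\<in>T. 0 \<le> p t \<and> p t \<le> 1)"

definition interp :: "'a set \<Rightarrow> ('a \<Rightarrow> real) \<Rightarrow> ('a set \<Rightarrow> real) \<Rightarrow> bool" where
  "interp T p Pr \<longleftrightarrow> (\<forall>w. 0 \<le> Pr w) \<and> (\<forall>w. \<not> w \<subseteq> T \<longrightarrow> Pr w = 0)
     \<and> (\<Sum>w\<in>Pow T. Pr w) = 1
     \<and> (\<forall>t\<in>T. (\<Sum>w\<in>{w\<in>Pow T. t \<in> w}. Pr w) = p t)"

text \<open>A set of denial constraints is represented by its violation predicate on worlds;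
  denial constraints are exactly the monotone ones (a superset of a violating world violates).\<close>
definition denial :: "'a set \<Rightarrow> ('a set \<Rightarrow> bool) \<Rightarrow> bool" where
  "denial T viol \<longleftrightarrow> (\<forall>w w'. w \<subseteq> w' \<longrightarrow> w' \<subseteq> T \<longrightarrow> viol w \<longrightarrow> viol w')"

definition model :: "'a set \<Rightarrow> ('a \<Rightarrow> real) \<Rightarrow> ('a set \<Rightarrow> bool) \<Rightarrow> ('a set \<Rightarrow> real) \<Rightarrow> bool" where
  "model T p viol Pr \<longleftrightarrow> interp T p Pr \<and> (\<forall>w. w \<subseteq> T \<longrightarrow> viol w \<longrightarrow> Pr w = 0)"

definition satisfies :: "'a set \<Rightarrow> ('a \<Rightarrow> real) \<Rightarrow> ('a set \<Rightarrow> bool) \<Rightarrow> bool" where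
  "satisfies T p viol \<longleftrightarrow> (\<exists>Pr. model T p viol Pr)"

definition conflict_hg :: "'a set \<Rightarrow> ('a set \<Rightarrow> bool) \<Rightarrow> 'a set set" where
  "conflict_hg T viol = {X. X \<subseteq> T \<and> (\<forall>w. X \<subseteq> w \<and> w \<subseteq> T \<longrightarrow> viol w)
      \<and> (\<forall>Y. Y \<subset> X \<longrightarrow> \<not> (\<forall>w. Y \<subseteq> w \<and> w \<subseteq> T \<longrightarrow> viol w))}"

definition pmin :: "'a set \<Rightarrow> ('a \<Rightarrow> real) \<Rightarrow> 'a set set \<Rightarrow> 'a set \<Rightarrow> real" where
  "pmin T p H X = Inf {(\<Sum>w\<in>{w\<in>Pow T. X \<subseteq> w}. Pr w) | Pr.
       interp T p Pr \<and> (\<forall>w\<in>Pow T. (\<exists>e\<in>H. e \<subseteq> w) \<longrightarrow> Pr w = 0)}"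

definition is_chain :: "'a set set \<Rightarrow> (nat \<Rightarrow> 'a set) \<Rightarrow> nat \<Rightarrow> bool" where
  "is_chain H e n \<longleftrightarrow> H = e ` {1..n} \<and> inj_on e {1..n} \<and>
     (\<forall>i\<in>{1..n}. \<forall>j\<in>{1..n}. i \<noteq> j \<longrightarrow> (e i \<inter> e j \<noteq> {} \<longleftrightarrow> (i = Suc j \<or> j = Suc i)))"

definition alpha :: "(nat \<Rightarrow> 'a set) \<Rightarrow> nat \<Rightarrow> 'a set" where
  "alpha e i = e i \<inter> e (Suc i)"

definition ears :: "(nat \<Rightarrow> 'a set) \<Rightarrow> nat \<Rightarrow> nat \<Rightarrow> 'a set" where
  "ears e n i = e i - \<Union> (e ` ({1..n} - {i}))"

definition sub :: "(nat \<Rightarrow> 'a set) \<Rightarrow> nat \<Rightarrow> 'a set set" where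
  "sub e n = e ` {2..n - 1}"

end

theory Submission
  imports Defs
begin

text \<open>
  The lower bound is inclusion-exclusion: a world containing b1 (resp. bn) and all of
  X = A1 \<union> R1 \<union> An \<union> Rn, where R1, Rn are the unused parts of the end ears, contains the
  hyperedge e1 (resp. en), so P(b1 \<union> bn) \<ge> P(b1) + P(bn) + P(X) - 1, and each term is at least its
  Fr\'echet bound, resp. the minimum for the inner chain.

  The upper bound is attained by gluing distributions block by block: a block B carrying a
  distribution that attains its Fr\'echet bound can be coupled with any distribution on the
  disjoint rest so that the presence of B falls on worlds of prescribed classes first.
  Starting from a nearly optimal distribution for the inner chain in which A1 and An are
  individually minimal, the blocks R1, Rn, b1, bn are glued in turn; each makes the new block
  overlap as little as possible with what would complete e1 or en, and b1, bn as little as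
  possible with each other. The same gluing, applied to the block R1 \<union> Rn that meets no inner
  hyperedge, gives the second identity, and applied one tuple at a time it shows that the
  Fr\'echet bound is attained.
\<close>

definition pdist :: "'a set \<Rightarrow> ('a set \<Rightarrow> real) \<Rightarrow> bool" where
  "pdist S Q \<longleftrightarrow> (\<forall>w. 0 \<le> Q w) \<and> (\<forall>w. \<not> w \<subseteq> S \<longrightarrow> Q w = 0) \<and> sum Q (Pow S) = 1"

definition ev_prob :: "'a set \<Rightarrow> ('a set \<Rightarrow> real) \<Rightarrow> ('a set \<Rightarrow> bool) \<Rightarrow> real" where
  "ev_prob S Q P = (\<Sum>w\<in>{w\<in>Pow S. P w}. Q w)"

definition forbids :: "'a set \<Rightarrow> ('a set \<Rightarrow> real) \<Rightarrow> 'a set \<Rightarrow> bool" where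
  "forbids S Q X \<longleftrightarrow> (\<forall>w. w \<subseteq> S \<longrightarrow> X \<subseteq> w \<longrightarrow> Q w = 0)"

lemma interp_iff_pdist:
  "interp S p Q \<longleftrightarrow> pdist S Q \<and> (\<forall>t\<in>S. ev_prob S Q (\<lambda>w. t \<in> w) = p t)"
  unfolding interp_def pdist_def ev_prob_def by auto

lemma interp_pdist: "interp S p Q \<Longrightarrow> pdist S Q"
  by (simp add: interp_iff_pdist)

lemma ev_prob_tuple: "interp S p Q \<Longrightarrow> t \<in> S \<Longrightarrow> ev_prob S Q (\<lambda>w. t \<in> w) = p t"
  by (simp add: interp_iff_pdist)

lemma ev_prob_if: "finite S \<Longrightarrow> ev_prob S Q P = (\<Sum>w\<in>Pow S. if P w then Q w else 0)"
  unfolding ev_prob_def by (subst sum.inter_filter[symmetric]) auto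

lemma ev_prob_cong: "(\<And>w. w \<subseteq> S \<Longrightarrow> P w = R w) \<Longrightarrow> ev_prob S Q P = ev_prob S Q R"
  unfolding ev_prob_def by (rule sum.cong) auto

lemma ev_prob_nonneg: "pdist S Q \<Longrightarrow> 0 \<le> ev_prob S Q P"
  unfolding ev_prob_def pdist_def by (auto intro: sum_nonneg)

lemma ev_prob_True: "pdist S Q \<Longrightarrow> ev_prob S Q (\<lambda>w. True) = 1"
  unfolding ev_prob_def pdist_def by (simp add: Pow_def)

lemma ev_prob_zero: "(\<And>w. w \<subseteq> S \<Longrightarrow> P w \<Longrightarrow> Q w = 0) \<Longrightarrow> ev_prob S Q P = 0"
  unfolding ev_prob_def by (rule sum.neutral) auto

lemma ev_prob_split:
  "finite S \<Longrightarrow> ev_prob S Q P = ev_prob S Q (\<lambda>w. P w \<and> R w) + ev_prob S Q (\<lambda>w. P w \<and> \<not> R w)"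
  by (simp add: ev_prob_if sum.distrib[symmetric]) (rule sum.cong, auto)

lemma ev_prob_compl: "finite S \<Longrightarrow> pdist S Q \<Longrightarrow> ev_prob S Q (\<lambda>w. \<not> P w) = 1 - ev_prob S Q P"
  using ev_prob_split[of S Q "\<lambda>w. True" P] ev_prob_True[of S Q] by simp

lemma ev_prob_mono:
  "finite S \<Longrightarrow> pdist S Q \<Longrightarrow> (\<And>w. w \<subseteq> S \<Longrightarrow> P w \<Longrightarrow> R w) \<Longrightarrow> ev_prob S Q P \<le> ev_prob S Q R"
  by (simp add: ev_prob_if pdist_def) (rule sum_mono, auto)

lemma ev_prob_le_1: "finite S \<Longrightarrow> pdist S Q \<Longrightarrow> ev_prob S Q P \<le> 1"
  using ev_prob_mono[of S Q P "\<lambda>w. True"] ev_prob_True[of S Q] by simp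

lemma ev_prob_conj_ge:
  assumes "finite S" "pdist S Q"
  shows "ev_prob S Q P + ev_prob S Q R - 1 \<le> ev_prob S Q (\<lambda>w. P w \<and> R w)"
  using ev_prob_split[OF assms(1), of Q P R] ev_prob_compl[OF assms, of R]
    ev_prob_mono[OF assms, of "\<lambda>w. P w \<and> \<not> R w" "\<lambda>w. \<not> R w"] by linarith

lemma ev_prob_disj_le:
  assumes "finite S" "pdist S Q"
  shows "ev_prob S Q (\<lambda>w. P w \<or> R w) \<le> ev_prob S Q P + ev_prob S Q R"
proof -
  have "ev_prob S Q (\<lambda>w. P w \<or> R w) = ev_prob S Q P + ev_prob S Q (\<lambda>w. (P w \<or> R w) \<and> \<not> P w)"
    using ev_prob_split[OF assms(1), of Q "\<lambda>w. P w \<or> R w" P] ev_prob_cong[of S "\<lambda>w. (P w \<or> R w) \<and> P w" P Q]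
    by auto
  moreover have "ev_prob S Q (\<lambda>w. (P w \<or> R w) \<and> \<not> P w) \<le> ev_prob S Q R"
    by (rule ev_prob_mono[OF assms]) auto
  ultimately show ?thesis by linarith
qed

lemma ev_prob_conj_ge_excluding:
  assumes "finite S" "pdist S Q" and "ev_prob S Q (\<lambda>w. (P1 w \<or> P2 w) \<and> P3 w) = 0"
  shows "ev_prob S Q P1 + ev_prob S Q P2 + ev_prob S Q P3 - 1 \<le> ev_prob S Q (\<lambda>w. P1 w \<and> P2 w)"
proof -
  have "ev_prob S Q (\<lambda>w. P3 w \<and> (P1 w \<or> P2 w)) = 0"
    using assms(3) ev_prob_cong[of S "\<lambda>w. P3 w \<and> (P1 w \<or> P2 w)" "\<lambda>w. (P1 w \<or> P2 w) \<and> P3 w" Q]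
    by auto
  hence "ev_prob S Q P3 = ev_prob S Q (\<lambda>w. P3 w \<and> \<not> (P1 w \<or> P2 w))"
    using ev_prob_split[OF assms(1), of Q P3 "\<lambda>w. P1 w \<or> P2 w"] by simp
  also have "\<dots> \<le> ev_prob S Q (\<lambda>w. \<not> P1 w \<and> \<not> P2 w)" by (rule ev_prob_mono[OF assms(1,2)]) auto
  finally have 3: "ev_prob S Q P3 \<le> ev_prob S Q (\<lambda>w. \<not> P1 w \<and> \<not> P2 w)" .
  have "ev_prob S Q (\<lambda>w. \<not> P1 w) = ev_prob S Q (\<lambda>w. \<not> P1 w \<and> P2 w) + ev_prob S Q (\<lambda>w. \<not> P1 w \<and> \<not> P2 w)"
    by (rule ev_prob_split[OF assms(1)])
  moreover have "ev_prob S Q P2 = ev_prob S Q (\<lambda>w. P1 w \<and> P2 w) + ev_prob S Q (\<lambda>w. \<not> P1 w \<and> P2 w)"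
    using ev_prob_split[OF assms(1), of Q P2 P1] by (simp add: conj_commute)
  ultimately show ?thesis using 3 ev_prob_compl[OF assms(1,2), of P1] by linarith
qed

lemma ev_prob_nonzero_class:
  assumes "finite S" and "\<And>w. (c :: 'a set \<Rightarrow> nat) w < 3"
  shows "ev_prob S Q (\<lambda>w. c w \<noteq> 0 \<and> E w) = ev_prob S Q (\<lambda>w. c w = 1 \<and> E w) + ev_prob S Q (\<lambda>w. c w = 2 \<and> E w)"
proof -
  have two: "c w \<noteq> 0 \<and> c w \<noteq> 1 \<longleftrightarrow> c w = 2" for w using assms(2)[of w] by auto
  have "ev_prob S Q (\<lambda>w. c w \<noteq> 0 \<and> E w) =
      ev_prob S Q (\<lambda>w. (c w \<noteq> 0 \<and> E w) \<and> c w = 1) + ev_prob S Q (\<lambda>w. (c w \<noteq> 0 \<and> E w) \<and> c w \<noteq> 1)"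
    by (rule ev_prob_split[OF assms(1)])
  also have "ev_prob S Q (\<lambda>w. (c w \<noteq> 0 \<and> E w) \<and> c w = 1) = ev_prob S Q (\<lambda>w. c w = 1 \<and> E w)"
    by (rule ev_prob_cong) auto
  also have "ev_prob S Q (\<lambda>w. (c w \<noteq> 0 \<and> E w) \<and> c w \<noteq> 1) = ev_prob S Q (\<lambda>w. c w = 2 \<and> E w)"
    by (rule ev_prob_cong) (use two in blast)
  finally show ?thesis .
qed

lemma ev_prob_three_classes:
  assumes "finite S" "pdist S Q" and "\<And>w. (c :: 'a set \<Rightarrow> nat) w < 3"
  shows "ev_prob S Q (\<lambda>w. c w = 0) + ev_prob S Q (\<lambda>w. c w = 1) + ev_prob S Q (\<lambda>w. c w = 2) = 1"
  using ev_prob_nonzero_class[OF assms(1,3), where Q=Q and E="\<lambda>_. True"] ev_prob_compl[OF assms(1,2), of "\<lambda>w. c w = 0"]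
  by simp

definition marginal :: "'a set \<Rightarrow> ('a set \<Rightarrow> real) \<Rightarrow> 'a set \<Rightarrow> ('a set \<Rightarrow> real) \<Rightarrow> bool" where
  "marginal S Q S' Q' \<longleftrightarrow> (\<forall>R. ev_prob S Q (\<lambda>w. R (w \<inter> S')) = ev_prob S' Q' R)"

lemma marginal_event:
  assumes "marginal S Q S' Q'" and "\<And>w. w \<subseteq> S \<Longrightarrow> P w = P' (w \<inter> S')"
  shows "ev_prob S Q P = ev_prob S' Q' P'"
proof -
  have "ev_prob S Q P = ev_prob S Q (\<lambda>w. P' (w \<inter> S'))" using assms(2) by (rule ev_prob_cong)
  then show ?thesis using assms(1) unfolding marginal_def by simp
qed

lemma marginal_subset_event:
  "marginal S Q S' Q' \<Longrightarrow> Z \<subseteq> S' \<Longrightarrow> ev_prob S Q (\<lambda>w. Z \<subseteq> w) = ev_prob S' Q' (\<lambda>w. Z \<subseteq> w)"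
  by (erule marginal_event) auto

lemma interp_glue:
  assumes "pdist (S1 \<union> S2) P" "marginal (S1 \<union> S2) P S1 Q1" "marginal (S1 \<union> S2) P S2 Q2"
    and "interp S1 p Q1" "interp S2 p Q2"
  shows "interp (S1 \<union> S2) p P"
  unfolding interp_iff_pdist
proof (intro conjI ballI)
  fix t assume t: "t \<in> S1 \<union> S2"
  show "ev_prob (S1 \<union> S2) P (\<lambda>w. t \<in> w) = p t"
  proof (cases "t \<in> S1")
    case True
    then show ?thesis using marginal_event[OF assms(2), of _ "\<lambda>w. t \<in> w"] ev_prob_tuple[OF assms(4)] by auto
  next
    case False
    with t show ?thesis using marginal_event[OF assms(3), of _ "\<lambda>w. t \<in> w"] ev_prob_tuple[OF assms(5)] by auto
  qed
qed fact

lemma sum_Pow_Un: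
  assumes "finite S1" "finite S2" "S1 \<inter> S2 = {}"
  shows "(\<Sum>w\<in>Pow (S1 \<union> S2). f w) = (\<Sum>w1\<in>Pow S1. \<Sum>w2\<in>Pow S2. f (w1 \<union> w2))"
proof -
  have "bij_betw (\<lambda>(a,b). a \<union> b) (Pow S1 \<times> Pow S2) (Pow (S1 \<union> S2))"
    by (rule bij_betw_byWitness[where f'="\<lambda>w. (w \<inter> S1, w \<inter> S2)"]) (use assms in auto)
  then show ?thesis
    by (simp add: sum.cartesian_product split_def sum.reindex_bij_betw[symmetric])
qed

definition class_prob :: "'a set \<Rightarrow> ('a set \<Rightarrow> real) \<Rightarrow> ('a set \<Rightarrow> nat) \<Rightarrow> nat \<Rightarrow> real" where
  "class_prob S Q c k = ev_prob S Q (\<lambda>w. c w = k)"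

lemma class_prob_sum: "class_prob S Q c k = (\<Sum>w\<in>{w\<in>Pow S. c w = k}. Q w)"
  unfolding class_prob_def ev_prob_def by simp

lemma class_prob_nonneg: "pdist S Q \<Longrightarrow> 0 \<le> class_prob S Q c k"
  unfolding class_prob_def by (rule ev_prob_nonneg)

text \<open>Given classifications c1, c2 of the worlds of two disjoint sets and a joint law J of the
  classes with the right marginals, glue Q1 and Q2 so that the classes are distributed by J and
  the two sides are conditionally independent given their classes.\<close>
definition coupled ::
  "'a set \<Rightarrow> 'a set \<Rightarrow> ('a set \<Rightarrow> real) \<Rightarrow> ('a set \<Rightarrow> real) \<Rightarrow> ('a set \<Rightarrow> nat) \<Rightarrow> ('a set \<Rightarrow> nat)
     \<Rightarrow> (nat \<Rightarrow> nat \<Rightarrow> real) \<Rightarrow> 'a set \<Rightarrow> real" where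
  "coupled S1 S2 Q1 Q2 c1 c2 J w = (if w \<subseteq> S1 \<union> S2 then
      Q1 (w \<inter> S1) * Q2 (w \<inter> S2) * J (c1 (w \<inter> S1)) (c2 (w \<inter> S2))
        / (class_prob S1 Q1 c1 (c1 (w \<inter> S1)) * class_prob S2 Q2 c2 (c2 (w \<inter> S2))) else 0)"

lemma coupled_swap: "coupled S1 S2 Q1 Q2 c1 c2 J = coupled S2 S1 Q2 Q1 c2 c1 (\<lambda>a b. J b a)"
  unfolding coupled_def by (rule ext) (simp add: Un_commute mult_ac)

locale class_coupling =
  fixes S1 S2 :: "'a set" and Q1 Q2 :: "'a set \<Rightarrow> real" and c1 c2 :: "'a set \<Rightarrow> nat"
    and K1 K2 :: "nat set" and J :: "nat \<Rightarrow> nat \<Rightarrow> real"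
  assumes finite1: "finite S1" and finite2: "finite S2" and disjoint: "S1 \<inter> S2 = {}"
    and pdist1: "pdist S1 Q1" and pdist2: "pdist S2 Q2"
    and finite_K1: "finite K1" and finite_K2: "finite K2"
    and class1: "\<And>w. c1 w \<in> K1" and class2: "\<And>w. c2 w \<in> K2"
    and J_nonneg: "\<And>a b. 0 \<le> J a b"
    and J_row: "\<And>a. a \<in> K1 \<Longrightarrow> (\<Sum>b\<in>K2. J a b) = class_prob S1 Q1 c1 a"
    and J_col: "\<And>b. b \<in> K2 \<Longrightarrow> (\<Sum>a\<in>K1. J a b) = class_prob S2 Q2 c2 b"
begin

abbreviation "P \<equiv> coupled S1 S2 Q1 Q2 c1 c2 J"

lemma Un_Int_left: "w1 \<subseteq> S1 \<Longrightarrow> w2 \<subseteq> S2 \<Longrightarrow> (w1 \<union> w2) \<inter> S1 = w1"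
  and Un_Int_right: "w1 \<subseteq> S1 \<Longrightarrow> w2 \<subseteq> S2 \<Longrightarrow> (w1 \<union> w2) \<inter> S2 = w2"
  using disjoint by auto

lemma coupled_Un:
  assumes "w1 \<subseteq> S1" "w2 \<subseteq> S2"
  shows "P (w1 \<union> w2) = Q1 w1 * Q2 w2 * J (c1 w1) (c2 w2)
        / (class_prob S1 Q1 c1 (c1 w1) * class_prob S2 Q2 c2 (c2 w2))"
  unfolding coupled_def using assms by (auto simp: Un_Int_left Un_Int_right)

lemma Q1_le_class_prob: "w \<subseteq> S1 \<Longrightarrow> Q1 w \<le> class_prob S1 Q1 c1 (c1 w)"
  unfolding class_prob_sum using pdist1 finite1 unfolding pdist_def by (intro member_le_sum) auto

lemma J_le_col: "a \<in> K1 \<Longrightarrow> b \<in> K2 \<Longrightarrow> J a b \<le> class_prob S2 Q2 c2 b"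
  using J_col[of b] member_le_sum[of a K1 "\<lambda>a. J a b"] J_nonneg finite_K1 by auto

lemma J_le_row: "a \<in> K1 \<Longrightarrow> b \<in> K2 \<Longrightarrow> J a b \<le> class_prob S1 Q1 c1 a"
  using J_row[of a] member_le_sum[of b K2 "\<lambda>b. J a b"] J_nonneg finite_K2 by auto

text \<open>Division by a vanishing class probability yields 0, which is harmless because J vanishes
  there too.\<close>
lemma class_prob_cancel: "a \<in> K1 \<Longrightarrow> b \<in> K2 \<Longrightarrow> class_prob S2 Q2 c2 b * (J a b / class_prob S2 Q2 c2 b) = J a b"
  using J_le_col[of a b] J_nonneg[of a b] by (cases "class_prob S2 Q2 c2 b = 0") auto

lemma coupled_row_sum:
  assumes w1: "w1 \<subseteq> S1"
  shows "(\<Sum>w2\<in>Pow S2. P (w1 \<union> w2)) = Q1 w1"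
proof -
  let ?k = "c1 w1" and ?m1 = "class_prob S1 Q1 c1" and ?m2 = "class_prob S2 Q2 c2"
  let ?f = "\<lambda>w2. Q2 w2 * J ?k (c2 w2) / ?m2 (c2 w2)"
  have "(\<Sum>w2\<in>Pow S2. P (w1 \<union> w2)) = Q1 w1 / ?m1 ?k * (\<Sum>w2\<in>Pow S2. ?f w2)"
    using w1 by (simp add: coupled_Un sum_distrib_left mult.assoc)
  also have "(\<Sum>w2\<in>Pow S2. ?f w2) = (\<Sum>b\<in>K2. \<Sum>w2\<in>{w2\<in>Pow S2. c2 w2 = b}. ?f w2)"
    using finite2 finite_K2 class2 by (intro sum.group[symmetric]) auto
  also have "\<dots> = (\<Sum>b\<in>K2. (\<Sum>w2\<in>{w2\<in>Pow S2. c2 w2 = b}. Q2 w2) * (J ?k b / ?m2 b))"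
    by (intro sum.cong refl) (auto simp: sum_distrib_right sum_divide_distrib intro!: sum.cong)
  also have "\<dots> = (\<Sum>b\<in>K2. ?m2 b * (J ?k b / ?m2 b))"
    by (simp only: class_prob_sum)
  also have "\<dots> = (\<Sum>b\<in>K2. J ?k b)"
    by (intro sum.cong refl class_prob_cancel class1)
  also have "\<dots> = ?m1 ?k" by (rule J_row[OF class1])
  finally show ?thesis
    using Q1_le_class_prob[OF w1] pdist1 unfolding pdist_def by (cases "?m1 ?k = 0") (auto intro: antisym)
qed

lemma marginal1: "marginal (S1 \<union> S2) P S1 Q1"
  unfolding marginal_def
proof
  fix R
  have "ev_prob (S1 \<union> S2) P (\<lambda>w. R (w \<inter> S1))
      = (\<Sum>w1\<in>Pow S1. \<Sum>w2\<in>Pow S2. if R ((w1 \<union> w2) \<inter> S1) then P (w1 \<union> w2) else 0)"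
    using finite1 finite2 by (simp add: ev_prob_if sum_Pow_Un[OF finite1 finite2 disjoint])
  also have "\<dots> = (\<Sum>w1\<in>Pow S1. if R w1 then (\<Sum>w2\<in>Pow S2. P (w1 \<union> w2)) else 0)"
    by (intro sum.cong refl) (simp add: Un_Int_left)
  also have "\<dots> = ev_prob S1 Q1 R"
    using finite1 by (simp add: ev_prob_if coupled_row_sum cong: if_cong)
  finally show "ev_prob (S1 \<union> S2) P (\<lambda>w. R (w \<inter> S1)) = ev_prob S1 Q1 R" .
qed

lemma ev_prob_classes:
  assumes "k1 \<in> K1" "k2 \<in> K2"
  shows "ev_prob (S1 \<union> S2) P (\<lambda>w. c1 (w \<inter> S1) = k1 \<and> c2 (w \<inter> S2) = k2) = J k1 k2"
proof -
  let ?m1 = "class_prob S1 Q1 c1 k1" and ?m2 = "class_prob S2 Q2 c2 k2"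
  let ?q1 = "\<lambda>w1. if c1 w1 = k1 then Q1 w1 else 0" and ?q2 = "\<lambda>w2. if c2 w2 = k2 then Q2 w2 else 0"
  have "ev_prob (S1 \<union> S2) P (\<lambda>w. c1 (w \<inter> S1) = k1 \<and> c2 (w \<inter> S2) = k2)
      = (\<Sum>w1\<in>Pow S1. \<Sum>w2\<in>Pow S2. if c1 ((w1 \<union> w2) \<inter> S1) = k1 \<and> c2 ((w1 \<union> w2) \<inter> S2) = k2
          then P (w1 \<union> w2) else 0)"
    using finite1 finite2 by (simp add: ev_prob_if sum_Pow_Un[OF finite1 finite2 disjoint])
  also have "\<dots> = (\<Sum>w1\<in>Pow S1. \<Sum>w2\<in>Pow S2. ?q1 w1 * (?q2 w2 * (J k1 k2 / (?m1 * ?m2))))"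
    by (intro sum.cong refl) (auto simp: coupled_Un Un_Int_left Un_Int_right)
  also have "\<dots> = (\<Sum>w1\<in>Pow S1. ?q1 w1) * (\<Sum>w2\<in>Pow S2. ?q2 w2 * (J k1 k2 / (?m1 * ?m2)))"
    by (rule sum_product[symmetric])
  also have "\<dots> = (\<Sum>w1\<in>Pow S1. ?q1 w1) * ((\<Sum>w2\<in>Pow S2. ?q2 w2) * (J k1 k2 / (?m1 * ?m2)))"
    by (simp only: sum_distrib_right)
  also have "\<dots> = ?m1 * (?m2 * (J k1 k2 / (?m1 * ?m2)))"
    using finite1 finite2 by (simp add: class_prob_def ev_prob_if)
  also have "\<dots> = J k1 k2"
    using J_le_row[OF assms] J_le_col[OF assms] J_nonneg[of k1 k2] by (cases "?m1 = 0 \<or> ?m2 = 0") auto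
  finally show ?thesis .
qed

lemma coupled_nonneg: "0 \<le> P w"
  using pdist1 pdist2 J_nonneg class_prob_nonneg[OF pdist1] class_prob_nonneg[OF pdist2]
  unfolding coupled_def pdist_def by (auto intro!: divide_nonneg_nonneg mult_nonneg_nonneg)

lemma pdist_coupled: "pdist (S1 \<union> S2) P"
proof -
  have "ev_prob (S1 \<union> S2) P (\<lambda>w. True) = 1"
    using marginal1[unfolded marginal_def, rule_format, of "\<lambda>_. True"] ev_prob_True[OF pdist1] by simp
  then show ?thesis unfolding pdist_def ev_prob_def using coupled_nonneg by (auto simp: coupled_def Pow_def)
qed

end

lemma class_coupling_swap:
  "class_coupling S1 S2 Q1 Q2 c1 c2 K1 K2 J \<Longrightarrow> class_coupling S2 S1 Q2 Q1 c2 c1 K2 K1 (\<lambda>a b. J b a)"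
  unfolding class_coupling_def by auto

lemma (in class_coupling) marginal2: "marginal (S1 \<union> S2) P S2 Q2"
proof -
  interpret swapped: class_coupling S2 S1 Q2 Q1 c2 c1 K2 K1 "\<lambda>a b. J b a"
    by (rule class_coupling_swap) (rule class_coupling_axioms)
  have "marginal (S2 \<union> S1) (coupled S2 S1 Q2 Q1 c2 c1 (\<lambda>a b. J b a)) S2 Q2"
    by (rule swapped.marginal1)
  moreover have "coupled S2 S1 Q2 Q1 c2 c1 (\<lambda>a b. J b a) = P" by (rule coupled_swap[symmetric])
  ultimately show ?thesis by (simp only: Un_commute[of S2 S1])
qed

lemma ev_prob_singleton: "x \<subseteq> S \<Longrightarrow> ev_prob S Q (\<lambda>w. w = x) = Q x"
proof -
  assume "x \<subseteq> S"
  then have "{w \<in> Pow S. w = x} = {x}" by auto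
  then show ?thesis unfolding ev_prob_def by simp
qed

lemma ev_prob_zeroD:
  assumes "finite S" "pdist S Q" "ev_prob S Q P = 0" "P w"
  shows "Q w = 0"
proof (cases "w \<subseteq> S")
  case True
  have "\<forall>v\<in>{v\<in>Pow S. P v}. Q v = 0"
    using assms(1-3) by (subst sum_nonneg_eq_0_iff[symmetric]) (auto simp: ev_prob_def pdist_def)
  then show ?thesis using True assms(4) by auto
qed (use assms(2) in \<open>auto simp: pdist_def\<close>)

lemma forbids_marginal:
  assumes "finite S" "pdist S Q" "marginal S Q S' Q'" "X \<subseteq> S'" "forbids S' Q' X"
  shows "forbids S Q X"
  unfolding forbids_def
proof (intro allI impI)
  fix w assume w: "w \<subseteq> S" "X \<subseteq> w"
  have "ev_prob S Q (\<lambda>v. v \<inter> S' = w \<inter> S') = ev_prob S' Q' (\<lambda>v. v = w \<inter> S')"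
    using assms(3) by (rule marginal_event) simp
  also have "\<dots> = Q' (w \<inter> S')" by (rule ev_prob_singleton) simp
  also have "\<dots> = 0" using assms(4,5) w unfolding forbids_def by auto
  finally show "Q w = 0" using ev_prob_zeroD[OF assms(1,2)] by blast
qed

text \<open>Pour the mass e into the classes 0, 1, 2 in this order, class k having capacity m k
  (the capacity of class 2 being whatever is needed).\<close>
definition greedy_fill :: "real \<Rightarrow> real \<Rightarrow> real \<Rightarrow> nat \<Rightarrow> real" where
  "greedy_fill e m0 m1 k = (if k = 0 then min e m0 else if k = 1 then min (e - min e m0) m1
     else e - min e m0 - min (e - min e m0) m1)"

lemma greedy_fill_bounds:
  assumes "0 \<le> e" "e \<le> 1" "0 \<le> m0" "0 \<le> m1" "0 \<le> m2" "m0 + m1 + m2 = 1"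
  shows "0 \<le> greedy_fill e m0 m1 0" "greedy_fill e m0 m1 0 \<le> m0"
    "0 \<le> greedy_fill e m0 m1 1" "greedy_fill e m0 m1 1 \<le> m1"
    "0 \<le> greedy_fill e m0 m1 2" "greedy_fill e m0 m1 2 \<le> m2"
    "greedy_fill e m0 m1 0 + greedy_fill e m0 m1 1 + greedy_fill e m0 m1 2 = e"
  using assms unfolding greedy_fill_def min_def by auto

lemma greedy_fill_12:
  "0 \<le> e \<Longrightarrow> 0 \<le> m0 \<Longrightarrow> 0 \<le> m1 \<Longrightarrow> greedy_fill e m0 m1 1 + greedy_fill e m0 m1 2 = max 0 (e - m0)"
  unfolding greedy_fill_def min_def by auto

lemma greedy_fill_2:
  "0 \<le> e \<Longrightarrow> 0 \<le> m0 \<Longrightarrow> 0 \<le> m1 \<Longrightarrow> greedy_fill e m0 m1 2 = max 0 (e - m0 - m1)"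
  unfolding greedy_fill_def min_def by auto

text \<open>The joint law of the class of the first side and of the indicator of E on the second
  side: the mass e of E goes greedily to class 0, then 1, then 2.\<close>
definition greedy_law :: "real \<Rightarrow> (nat \<Rightarrow> real) \<Rightarrow> nat \<Rightarrow> nat \<Rightarrow> real" where
  "greedy_law e m k b = (if k < 3 then if b = 1 then greedy_fill e (m 0) (m 1) k
     else m k - greedy_fill e (m 0) (m 1) k else 0)"

lemma class_coupling_greedy_law:
  fixes c :: "'a set \<Rightarrow> nat" and E :: "'a set \<Rightarrow> bool"
  assumes fin1: "finite S1" and fin2: "finite S2" and disj: "S1 \<inter> S2 = {}"
    and pd1: "pdist S1 Q1" and pd2: "pdist S2 Q2" and c: "\<And>w. c w < 3"
  defines "m \<equiv> \<lambda>k. ev_prob S1 Q1 (\<lambda>w. c w = k)" and "e \<equiv> ev_prob S2 Q2 E"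
  shows "class_coupling S1 S2 Q1 Q2 c (\<lambda>w. if E w then 1 else 0) {0, 1, 2} {0, 1} (greedy_law e m)"
proof
  let ?J = "greedy_law e m" and ?c2 = "\<lambda>w. if E w then 1 else (0::nat)"
  have m_nonneg: "0 \<le> m k" for k unfolding m_def by (rule ev_prob_nonneg[OF pd1])
  have m_sum: "m 0 + m 1 + m 2 = 1" unfolding m_def using ev_prob_three_classes[OF fin1 pd1 c] .
  have e: "0 \<le> e" "e \<le> 1" unfolding e_def using ev_prob_nonneg[OF pd2] ev_prob_le_1[OF fin2 pd2] by auto
  note F = greedy_fill_bounds[OF e m_nonneg m_nonneg m_nonneg m_sum]
  have class2_1: "class_prob S2 Q2 ?c2 1 = e"
    unfolding class_prob_def e_def by (rule ev_prob_cong) auto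
  have class2_0: "class_prob S2 Q2 ?c2 0 = 1 - e"
    using ev_prob_compl[OF fin2 pd2, of E] ev_prob_cong[of S2 "\<lambda>w. ?c2 w = 0" "\<lambda>w. \<not> E w" Q2]
    unfolding class_prob_def e_def by auto
  show "c w \<in> {0, 1, 2}" for w using c[of w] by auto
  show "0 \<le> ?J a b" for a b
    unfolding greedy_law_def using F by (auto simp: less_Suc_eq numeral_3_eq_3 numeral_2_eq_2)
  show "(\<Sum>b\<in>{0, 1}. ?J a b) = class_prob S1 Q1 c a" if "a \<in> {0, 1, 2}" for a
    using that unfolding greedy_law_def class_prob_def m_def by auto
  show "(\<Sum>a\<in>{0, 1, 2}. ?J a b) = class_prob S2 Q2 ?c2 b" if "b \<in> {0, 1}" for b
    using that F m_sum class2_0 class2_1 unfolding greedy_law_def by auto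
qed (use assms in auto)

lemma glue:
  fixes c :: "'a set \<Rightarrow> nat" and E :: "'a set \<Rightarrow> bool"
  assumes fin1: "finite S1" and fin2: "finite S2" and disj: "S1 \<inter> S2 = {}"
    and pd1: "pdist S1 Q1" and pd2: "pdist S2 Q2" and c: "\<And>w. c w < 3"
  defines "m \<equiv> \<lambda>k. ev_prob S1 Q1 (\<lambda>w. c w = k)" and "e \<equiv> ev_prob S2 Q2 E"
  obtains P where "pdist (S1 \<union> S2) P" "marginal (S1 \<union> S2) P S1 Q1" "marginal (S1 \<union> S2) P S2 Q2"
    "ev_prob (S1 \<union> S2) P (\<lambda>w. c (w \<inter> S1) \<noteq> 0 \<and> E (w \<inter> S2)) = max 0 (e - m 0)"
    "ev_prob (S1 \<union> S2) P (\<lambda>w. c (w \<inter> S1) = 2 \<and> E (w \<inter> S2)) = max 0 (e - m 0 - m 1)"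
proof -
  let ?c2 = "\<lambda>w. if E w then 1 else (0::nat)" and ?F = "greedy_fill e (m 0) (m 1)"
  interpret coupling: class_coupling S1 S2 Q1 Q2 c ?c2 "{0, 1, 2}" "{0, 1}" "greedy_law e m"
    unfolding m_def e_def by (rule class_coupling_greedy_law[OF fin1 fin2 disj pd1 pd2 c])
  let ?P = "coupled S1 S2 Q1 Q2 c ?c2 (greedy_law e m)"
  have m_nonneg: "0 \<le> m k" for k unfolding m_def by (rule ev_prob_nonneg[OF pd1])
  have e_nonneg: "0 \<le> e" unfolding e_def by (rule ev_prob_nonneg[OF pd2])
  have class_E: "ev_prob (S1 \<union> S2) ?P (\<lambda>w. c (w \<inter> S1) = k \<and> E (w \<inter> S2)) = ?F k" if "k \<in> {0, 1, 2}" for k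
  proof -
    have "ev_prob (S1 \<union> S2) ?P (\<lambda>w. c (w \<inter> S1) = k \<and> E (w \<inter> S2))
        = ev_prob (S1 \<union> S2) ?P (\<lambda>w. c (w \<inter> S1) = k \<and> ?c2 (w \<inter> S2) = 1)"
      by (rule ev_prob_cong) auto
    also have "\<dots> = ?F k" using that by (subst coupling.ev_prob_classes) (auto simp: greedy_law_def)
    finally show ?thesis .
  qed
  show ?thesis
  proof
    show "pdist (S1 \<union> S2) ?P" by (rule coupling.pdist_coupled)
    show "marginal (S1 \<union> S2) ?P S1 Q1" by (rule coupling.marginal1)
    show "marginal (S1 \<union> S2) ?P S2 Q2" by (rule coupling.marginal2)
    show "ev_prob (S1 \<union> S2) ?P (\<lambda>w. c (w \<inter> S1) \<noteq> 0 \<and> E (w \<inter> S2)) = max 0 (e - m 0)"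
      using ev_prob_nonzero_class[of "S1 \<union> S2" "\<lambda>w. c (w \<inter> S1)"] fin1 fin2 c class_E
        greedy_fill_12[OF e_nonneg m_nonneg m_nonneg] by simp
    show "ev_prob (S1 \<union> S2) ?P (\<lambda>w. c (w \<inter> S1) = 2 \<and> E (w \<inter> S2)) = max 0 (e - m 0 - m 1)"
      using class_E greedy_fill_2[OF e_nonneg m_nonneg m_nonneg] by simp
  qed
qed

lemma exists_marginal:
  assumes fin: "finite S" and Q: "interp S p Q" and sub: "S' \<subseteq> S"
  obtains Q' where "interp S' p Q'" "marginal S Q S' Q'"
    "\<And>X. X \<subseteq> S' \<Longrightarrow> forbids S Q X \<Longrightarrow> forbids S' Q' X"
proof -
  define Q' where "Q' = (\<lambda>v. if v \<subseteq> S' then ev_prob S Q (\<lambda>w. w \<inter> S' = v) else 0)"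
  have fin': "finite S'" using sub fin by (rule finite_subset)
  have pd: "pdist S Q" using Q by (rule interp_pdist)
  have marg: "marginal S Q S' Q'"
    unfolding marginal_def
  proof
    fix R
    have "ev_prob S' Q' R = (\<Sum>v\<in>Pow S'. if R v then Q' v else 0)" by (rule ev_prob_if[OF fin'])
    also have "\<dots> = (\<Sum>v\<in>Pow S'. \<Sum>w\<in>{w\<in>Pow S. w \<inter> S' = v}. if R (w \<inter> S') then Q w else 0)"
    proof (rule sum.cong)
      fix v assume v: "v \<in> Pow S'"
      have "(\<Sum>w\<in>{w\<in>Pow S. w \<inter> S' = v}. if R (w \<inter> S') then Q w else 0)
          = (\<Sum>w\<in>{w\<in>Pow S. w \<inter> S' = v}. if R v then Q w else 0)" by (rule sum.cong) auto
      then show "(if R v then Q' v else 0) = (\<Sum>w\<in>{w\<in>Pow S. w \<inter> S' = v}. if R (w \<inter> S') then Q w else 0)"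
        using v unfolding Q'_def ev_prob_def by simp
    qed simp
    also have "\<dots> = (\<Sum>w\<in>Pow S. if R (w \<inter> S') then Q w else 0)"
      using fin fin' by (intro sum.group) auto
    also have "\<dots> = ev_prob S Q (\<lambda>w. R (w \<inter> S'))" by (simp add: ev_prob_if[OF fin])
    finally show "ev_prob S Q (\<lambda>w. R (w \<inter> S')) = ev_prob S' Q' R" ..
  qed
  have "pdist S' Q'"
    using marg[unfolded marginal_def, rule_format, of "\<lambda>_. True"] ev_prob_True[OF pd] ev_prob_nonneg[OF pd]
    unfolding pdist_def ev_prob_def Q'_def by (auto simp: Pow_def)
  moreover have "ev_prob S' Q' (\<lambda>w. t \<in> w) = p t" if "t \<in> S'" for t
    using marginal_event[OF marg, of "\<lambda>w. t \<in> w" "\<lambda>w. t \<in> w"] ev_prob_tuple[OF Q, of t] that sub by auto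
  ultimately have "interp S' p Q'" unfolding interp_iff_pdist by auto
  moreover have "forbids S' Q' X" if "X \<subseteq> S'" "forbids S Q X" for X
    using that unfolding forbids_def Q'_def by (auto intro!: ev_prob_zero)
  ultimately show ?thesis using that marg by blast
qed

definition frechet :: "('a \<Rightarrow> real) \<Rightarrow> 'a set \<Rightarrow> real" where
  "frechet p X = max 0 ((\<Sum>t\<in>X. p t) - real (card X) + 1)"

lemma frechet_bounds: "\<forall>t\<in>X. p t \<le> 1 \<Longrightarrow> 0 \<le> frechet p X \<and> frechet p X \<le> 1"
  using sum_mono[of X p "\<lambda>_. 1"] unfolding frechet_def by auto

lemma frechet_insert:
  assumes "finite X" "t \<notin> X" "\<forall>t\<in>insert t X. p t \<le> 1"
  shows "frechet p (insert t X) = max 0 (p t + frechet p X - 1)"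
  using assms frechet_bounds[of X p] unfolding frechet_def by (auto simp: max_def)

lemma frechet_Un_ge:
  assumes "finite X" "finite Y" "X \<inter> Y = {}" "\<forall>t\<in>X \<union> Y. p t \<le> 1"
  shows "frechet p X + frechet p Y - 1 \<le> frechet p (X \<union> Y)"
  using assms frechet_bounds[of X p] frechet_bounds[of Y p]
  unfolding frechet_def by (auto simp: card_Un_disjoint sum.union_disjoint max_def)

lemma frechet_le_ev_prob:
  assumes fin: "finite S" and Q: "interp S p Q" and X: "X \<subseteq> S"
  shows "frechet p X \<le> ev_prob S Q (\<lambda>w. X \<subseteq> w)"
proof -
  have pd: "pdist S Q" using Q by (rule interp_pdist)
  from finite_subset[OF X fin] X show ?thesis
  proof (induction X rule: finite_induct)
    case empty
    show ?case unfolding frechet_def using ev_prob_True[OF pd] by simp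
  next
    case (insert t X)
    have "ev_prob S Q (\<lambda>w. X \<subseteq> w) + ev_prob S Q (\<lambda>w. t \<in> w) - 1 \<le> ev_prob S Q (\<lambda>w. X \<subseteq> w \<and> t \<in> w)"
      by (rule ev_prob_conj_ge[OF fin pd])
    moreover have "ev_prob S Q (\<lambda>w. t \<in> w) = p t" using ev_prob_tuple[OF Q] insert.prems by auto
    moreover have "ev_prob S Q (\<lambda>w. X \<subseteq> w \<and> t \<in> w) = ev_prob S Q (\<lambda>w. insert t X \<subseteq> w)"
      by (rule ev_prob_cong) auto
    moreover have "(\<Sum>x\<in>X. p x) - real (card X) + 1 \<le> frechet p X" unfolding frechet_def by simp
    ultimately show ?case
      using insert ev_prob_nonneg[OF pd, of "\<lambda>w. insert t X \<subseteq> w"] unfolding frechet_def by auto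
  qed
qed

lemma interp_singleton:
  assumes "0 \<le> p t" "p t \<le> 1"
  shows "interp {t} p (\<lambda>w. if w = {t} then p t else if w = {} then 1 - p t else 0)"
proof -
  have "Pow {t} = {{}, {t}}" "{w \<in> Pow {t}. t \<in> w} = {{t}}" by auto
  then show ?thesis using assms unfolding interp_iff_pdist pdist_def ev_prob_def
    by (auto simp: subset_singleton_iff)
qed

lemma exists_interp_frechet_all:
  assumes "finite S" "\<forall>t\<in>S. 0 \<le> p t \<and> p t \<le> 1"
  shows "\<exists>Q. interp S p Q \<and> ev_prob S Q (\<lambda>w. S \<subseteq> w) = frechet p S"
  using assms
proof (induction S rule: finite_induct)
  case empty
  have "interp {} p (\<lambda>w. if w = {} then 1 else 0)" unfolding interp_def by auto
  then show ?case unfolding frechet_def ev_prob_def by (intro exI) auto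
next
  case (insert t S)
  then obtain Q1 where Q1: "interp S p Q1" "ev_prob S Q1 (\<lambda>w. S \<subseteq> w) = frechet p S" by auto
  let ?Q2 = "\<lambda>w. if w = {t} then p t else if w = {} then 1 - p t else 0"
  have Q2: "interp {t} p ?Q2" using insert.prems by (intro interp_singleton) auto
  define c :: "'a set \<Rightarrow> nat" where "c = (\<lambda>w. if S \<subseteq> w then 1 else 0)"
  obtain P where P: "pdist (S \<union> {t}) P" "marginal (S \<union> {t}) P S Q1" "marginal (S \<union> {t}) P {t} ?Q2"
    "ev_prob (S \<union> {t}) P (\<lambda>w. c (w \<inter> S) \<noteq> 0 \<and> t \<in> w \<inter> {t})
       = max 0 (ev_prob {t} ?Q2 (\<lambda>w. t \<in> w) - ev_prob S Q1 (\<lambda>w. c w = 0))"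
    "ev_prob (S \<union> {t}) P (\<lambda>w. c (w \<inter> S) = 2 \<and> t \<in> w \<inter> {t})
       = max 0 (ev_prob {t} ?Q2 (\<lambda>w. t \<in> w) - ev_prob S Q1 (\<lambda>w. c w = 0) - ev_prob S Q1 (\<lambda>w. c w = 1))"
    by (rule glue[OF insert.hyps(1) _ _ interp_pdist[OF Q1(1)] interp_pdist[OF Q2], where c=c and E="\<lambda>w. t \<in> w"])
      (use insert.hyps in \<open>auto simp: c_def\<close>)
  have "ev_prob S Q1 (\<lambda>w. c w = 0) = 1 - frechet p S"
    using ev_prob_compl[OF insert.hyps(1) interp_pdist[OF Q1(1)], of "\<lambda>w. S \<subseteq> w"] Q1(2)
      ev_prob_cong[of S "\<lambda>w. c w = 0" "\<lambda>w. \<not> S \<subseteq> w" Q1] unfolding c_def by auto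
  moreover have "ev_prob (S \<union> {t}) P (\<lambda>w. insert t S \<subseteq> w) = ev_prob (S \<union> {t}) P (\<lambda>w. c (w \<inter> S) \<noteq> 0 \<and> t \<in> w \<inter> {t})"
    by (rule ev_prob_cong) (auto simp: c_def)
  ultimately have "ev_prob (insert t S) P (\<lambda>w. insert t S \<subseteq> w) = frechet p (insert t S)"
    using P(4) ev_prob_tuple[OF Q2, of t] frechet_insert[of S t p] insert by simp
  moreover have "interp (insert t S) p P" using interp_glue[OF P(1-3) Q1(1) Q2] by simp
  ultimately show ?case by blast
qed

lemma glue_frechet:
  fixes c :: "'a set \<Rightarrow> nat"
  assumes fin: "finite N" "finite B" and disj: "N \<inter> B = {}" and Q: "interp N p Q"
    and p: "\<forall>t\<in>B. 0 \<le> p t \<and> p t \<le> 1" and c: "\<And>w. c w < 3"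
  defines "m \<equiv> \<lambda>k. ev_prob N Q (\<lambda>w. c w = k)"
  obtains P where "interp (N \<union> B) p P" "marginal (N \<union> B) P N Q"
    "ev_prob (N \<union> B) P (\<lambda>w. B \<subseteq> w) = frechet p B"
    "ev_prob (N \<union> B) P (\<lambda>w. c (w \<inter> N) \<noteq> 0 \<and> B \<subseteq> w) = max 0 (frechet p B - m 0)"
    "ev_prob (N \<union> B) P (\<lambda>w. c (w \<inter> N) = 2 \<and> B \<subseteq> w) = max 0 (frechet p B - m 0 - m 1)"
proof -
  obtain QB where QB: "interp B p QB" "ev_prob B QB (\<lambda>w. B \<subseteq> w) = frechet p B"
    using exists_interp_frechet_all[OF fin(2) p] by blast
  obtain P where P: "pdist (N \<union> B) P" "marginal (N \<union> B) P N Q" "marginal (N \<union> B) P B QB"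
    "ev_prob (N \<union> B) P (\<lambda>w. c (w \<inter> N) \<noteq> 0 \<and> B \<subseteq> w \<inter> B) = max 0 (ev_prob B QB (\<lambda>w. B \<subseteq> w) - m 0)"
    "ev_prob (N \<union> B) P (\<lambda>w. c (w \<inter> N) = 2 \<and> B \<subseteq> w \<inter> B) = max 0 (ev_prob B QB (\<lambda>w. B \<subseteq> w) - m 0 - m 1)"
    unfolding m_def by (rule glue[OF fin disj interp_pdist[OF Q] interp_pdist[OF QB(1)] c, where E="\<lambda>w. B \<subseteq> w"])
  show ?thesis
  proof
    show "interp (N \<union> B) p P" by (rule interp_glue[OF P(1-3) Q QB(1)])
    show "ev_prob (N \<union> B) P (\<lambda>w. B \<subseteq> w) = frechet p B"
      using marginal_subset_event[OF P(3)] QB(2) by simp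
  qed (use P QB(2) in simp_all)
qed

text \<open>B is glued so as to avoid X, and then Y, as far as possible.\<close>
lemma glue_frechet_nested:
  assumes fin: "finite N" "finite B" and disj: "N \<inter> B = {}" and Q: "interp N p Q"
    and p: "\<forall>t\<in>B. 0 \<le> p t \<and> p t \<le> 1" and XY: "X \<subseteq> N" "Y \<subseteq> N"
  obtains P where "interp (N \<union> B) p P" "marginal (N \<union> B) P N Q"
    "ev_prob (N \<union> B) P (\<lambda>w. X \<union> B \<subseteq> w) = max 0 (frechet p B - (1 - ev_prob N Q (\<lambda>w. X \<subseteq> w)))"
    "ev_prob (N \<union> B) P (\<lambda>w. X \<union> Y \<union> B \<subseteq> w) = max 0 (frechet p B - (1 - ev_prob N Q (\<lambda>w. X \<union> Y \<subseteq> w)))"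
proof -
  define c :: "'a set \<Rightarrow> nat" where "c = (\<lambda>w. if \<not> X \<subseteq> w then 0 else if \<not> Y \<subseteq> w then 1 else 2)"
  have c3: "\<And>w. c w < 3" unfolding c_def by simp
  obtain P where P: "interp (N \<union> B) p P" "marginal (N \<union> B) P N Q"
    "ev_prob (N \<union> B) P (\<lambda>w. c (w \<inter> N) \<noteq> 0 \<and> B \<subseteq> w) = max 0 (frechet p B - ev_prob N Q (\<lambda>w. c w = 0))"
    "ev_prob (N \<union> B) P (\<lambda>w. c (w \<inter> N) = 2 \<and> B \<subseteq> w)
       = max 0 (frechet p B - ev_prob N Q (\<lambda>w. c w = 0) - ev_prob N Q (\<lambda>w. c w = 1))"
    by (rule glue_frechet[OF fin disj Q p c3])
  have pd: "pdist N Q" using Q by (rule interp_pdist)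
  have "ev_prob N Q (\<lambda>w. c w = 0) = ev_prob N Q (\<lambda>w. \<not> X \<subseteq> w)"
    by (rule ev_prob_cong) (simp add: c_def)
  then have m0: "ev_prob N Q (\<lambda>w. c w = 0) = 1 - ev_prob N Q (\<lambda>w. X \<subseteq> w)"
    using ev_prob_compl[OF fin(1) pd] by simp
  have "ev_prob N Q (\<lambda>w. c w = 2) = ev_prob N Q (\<lambda>w. X \<union> Y \<subseteq> w)"
    by (rule ev_prob_cong) (simp add: c_def)
  then have m01: "ev_prob N Q (\<lambda>w. c w = 0) + ev_prob N Q (\<lambda>w. c w = 1) = 1 - ev_prob N Q (\<lambda>w. X \<union> Y \<subseteq> w)"
    using ev_prob_three_classes[where c=c, OF fin(1) pd c3] by simp
  show ?thesis
  proof (rule that[OF P(1,2)])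
    have "ev_prob (N \<union> B) P (\<lambda>w. X \<union> B \<subseteq> w) = ev_prob (N \<union> B) P (\<lambda>w. c (w \<inter> N) \<noteq> 0 \<and> B \<subseteq> w)"
      using XY by (intro ev_prob_cong) (auto simp: c_def)
    then show "ev_prob (N \<union> B) P (\<lambda>w. X \<union> B \<subseteq> w) = max 0 (frechet p B - (1 - ev_prob N Q (\<lambda>w. X \<subseteq> w)))"
      using P(3) m0 by simp
    have "ev_prob (N \<union> B) P (\<lambda>w. X \<union> Y \<union> B \<subseteq> w) = ev_prob (N \<union> B) P (\<lambda>w. c (w \<inter> N) = 2 \<and> B \<subseteq> w)"
      using XY by (intro ev_prob_cong) (auto simp: c_def)
    then show "ev_prob (N \<union> B) P (\<lambda>w. X \<union> Y \<union> B \<subseteq> w) = max 0 (frechet p B - (1 - ev_prob N Q (\<lambda>w. X \<union> Y \<subseteq> w)))"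
      using P(4) m01 by (simp add: algebra_simps)
  qed
qed

text \<open>B is glued so as to avoid K altogether if its mass allows it, and to fall preferably on
  the worlds satisfying W.\<close>
lemma glue_frechet_avoiding:
  assumes fin: "finite N" "finite B" and disj: "N \<inter> B = {}" and Q: "interp N p Q"
    and p: "\<forall>t\<in>B. 0 \<le> p t \<and> p t \<le> 1" and K: "K \<subseteq> N"
  obtains P where "interp (N \<union> B) p P" "marginal (N \<union> B) P N Q"
    "ev_prob (N \<union> B) P (\<lambda>w. B \<subseteq> w) = frechet p B"
    "ev_prob (N \<union> B) P (\<lambda>w. B \<subseteq> w \<and> \<not> W (w \<inter> N)) \<le> max 0 (frechet p B - ev_prob N Q (\<lambda>w. W w \<and> \<not> K \<subseteq> w))"
    "frechet p B \<le> 1 - ev_prob N Q (\<lambda>w. K \<subseteq> w) \<Longrightarrow> forbids (N \<union> B) P (K \<union> B)"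
proof -
  define c :: "'a set \<Rightarrow> nat" where "c = (\<lambda>w. if K \<subseteq> w then 2 else if W w then 0 else 1)"
  have c3: "\<And>w. c w < 3" unfolding c_def by simp
  obtain P where P: "interp (N \<union> B) p P" "marginal (N \<union> B) P N Q"
    "ev_prob (N \<union> B) P (\<lambda>w. B \<subseteq> w) = frechet p B"
    "ev_prob (N \<union> B) P (\<lambda>w. c (w \<inter> N) \<noteq> 0 \<and> B \<subseteq> w) = max 0 (frechet p B - ev_prob N Q (\<lambda>w. c w = 0))"
    "ev_prob (N \<union> B) P (\<lambda>w. c (w \<inter> N) = 2 \<and> B \<subseteq> w)
       = max 0 (frechet p B - ev_prob N Q (\<lambda>w. c w = 0) - ev_prob N Q (\<lambda>w. c w = 1))"
    by (rule glue_frechet[OF fin disj Q p c3])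
  have pd: "pdist N Q" using Q by (rule interp_pdist)
  have pdP: "pdist (N \<union> B) P" using P(1) by (rule interp_pdist)
  have m0: "ev_prob N Q (\<lambda>w. c w = 0) = ev_prob N Q (\<lambda>w. W w \<and> \<not> K \<subseteq> w)"
    by (rule ev_prob_cong) (auto simp: c_def)
  have "ev_prob N Q (\<lambda>w. c w = 2) = ev_prob N Q (\<lambda>w. K \<subseteq> w)"
    by (rule ev_prob_cong) (simp add: c_def)
  then have m01: "ev_prob N Q (\<lambda>w. c w = 0) + ev_prob N Q (\<lambda>w. c w = 1) = 1 - ev_prob N Q (\<lambda>w. K \<subseteq> w)"
    using ev_prob_three_classes[where c=c, OF fin(1) pd c3] by simp
  show ?thesis
  proof (rule that[OF P(1-3)])
    have "ev_prob (N \<union> B) P (\<lambda>w. B \<subseteq> w \<and> \<not> W (w \<inter> N)) \<le> ev_prob (N \<union> B) P (\<lambda>w. c (w \<inter> N) \<noteq> 0 \<and> B \<subseteq> w)"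
      using fin by (intro ev_prob_mono[OF _ pdP]) (auto simp: c_def)
    then show "ev_prob (N \<union> B) P (\<lambda>w. B \<subseteq> w \<and> \<not> W (w \<inter> N)) \<le> max 0 (frechet p B - ev_prob N Q (\<lambda>w. W w \<and> \<not> K \<subseteq> w))"
      using P(4) m0 by simp
  next
    assume "frechet p B \<le> 1 - ev_prob N Q (\<lambda>w. K \<subseteq> w)"
    then have "ev_prob (N \<union> B) P (\<lambda>w. c (w \<inter> N) = 2 \<and> B \<subseteq> w) = 0"
      using P(5) m01 by simp
    then show "forbids (N \<union> B) P (K \<union> B)"
      unfolding forbids_def using ev_prob_zeroD[OF _ pdP] fin K by (fastforce simp: c_def)
  qed
qed

lemma frechet_add_ev_prob_le_1:
  assumes "finite S" "interp S p Q" "X \<subseteq> S" "forbids S Q (X \<union> Y)"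
  shows "frechet p X + ev_prob S Q (\<lambda>w. Y \<subseteq> w) \<le> 1"
proof -
  have "ev_prob S Q (\<lambda>w. X \<subseteq> w) + ev_prob S Q (\<lambda>w. Y \<subseteq> w) - 1 \<le> ev_prob S Q (\<lambda>w. X \<subseteq> w \<and> Y \<subseteq> w)"
    using assms(1) interp_pdist[OF assms(2)] by (rule ev_prob_conj_ge)
  moreover have "ev_prob S Q (\<lambda>w. X \<subseteq> w \<and> Y \<subseteq> w) = 0"
    using assms(4) unfolding forbids_def by (intro ev_prob_zero) auto
  moreover have "frechet p X \<le> ev_prob S Q (\<lambda>w. X \<subseteq> w)" by (rule frechet_le_ev_prob[OF assms(1-3)])
  ultimately show ?thesis by linarith
qed

lemma frechet_le_ev_prob_avoiding:
  assumes fin: "finite S" and Q: "interp S p Q" and \<alpha>: "\<alpha> \<subseteq> S" and forb: "forbids S Q (\<alpha> \<union> K)"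
  shows "frechet p \<alpha> \<le> ev_prob S Q (\<lambda>w. \<alpha> \<union> V \<subseteq> w) + ev_prob S Q (\<lambda>w. \<not> V \<subseteq> w \<and> \<not> K \<subseteq> w)"
proof -
  have pd: "pdist S Q" using Q by (rule interp_pdist)
  have "frechet p \<alpha> \<le> ev_prob S Q (\<lambda>w. \<alpha> \<subseteq> w)" by (rule frechet_le_ev_prob[OF fin Q \<alpha>])
  also have "\<dots> = ev_prob S Q (\<lambda>w. \<alpha> \<subseteq> w \<and> K \<subseteq> w) + ev_prob S Q (\<lambda>w. \<alpha> \<subseteq> w \<and> \<not> K \<subseteq> w)"
    by (rule ev_prob_split[OF fin])
  also have "ev_prob S Q (\<lambda>w. \<alpha> \<subseteq> w \<and> K \<subseteq> w) = 0"
    using forb unfolding forbids_def by (intro ev_prob_zero) blast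
  also have "ev_prob S Q (\<lambda>w. \<alpha> \<subseteq> w \<and> \<not> K \<subseteq> w) \<le> ev_prob S Q (\<lambda>w. \<alpha> \<union> V \<subseteq> w \<or> (\<not> V \<subseteq> w \<and> \<not> K \<subseteq> w))"
    by (rule ev_prob_mono[OF fin pd]) auto
  also have "\<dots> \<le> ev_prob S Q (\<lambda>w. \<alpha> \<union> V \<subseteq> w) + ev_prob S Q (\<lambda>w. \<not> V \<subseteq> w \<and> \<not> K \<subseteq> w)"
    by (rule ev_prob_disj_le[OF fin pd])
  finally show ?thesis by simp
qed

lemma exists_interp_frechet:
  assumes fin: "finite T" and p: "\<forall>t\<in>T. 0 \<le> p t \<and> p t \<le> 1" and X: "X \<subseteq> T"
  obtains Q where "interp T p Q" "ev_prob T Q (\<lambda>w. X \<subseteq> w) = frechet p X"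
proof -
  obtain Q where Q: "interp (T - X) p Q" using exists_interp_frechet_all[of "T - X" p] fin p by auto
  have "\<exists>P. interp (T - X \<union> X) p P \<and> ev_prob (T - X \<union> X) P (\<lambda>w. X \<subseteq> w) = frechet p X"
    by (rule glue_frechet[OF _ finite_subset[OF X fin] _ Q, where c="\<lambda>_. 0"]) (use fin p X in auto)
  moreover have "T - X \<union> X = T" using X by auto
  ultimately show ?thesis using that by metis
qed

definition feasible :: "'a set \<Rightarrow> ('a \<Rightarrow> real) \<Rightarrow> 'a set set \<Rightarrow> ('a set \<Rightarrow> real) \<Rightarrow> bool" where
  "feasible T p H Q \<longleftrightarrow> interp T p Q \<and> (\<forall>X\<in>H. forbids T Q X)"

lemma feasible_mono: "feasible T p H Q \<Longrightarrow> H' \<subseteq> H \<Longrightarrow> feasible T p H' Q"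
  unfolding feasible_def by blast

lemma pmin_eq_Inf: "pmin T p H X = Inf {ev_prob T Q (\<lambda>w. X \<subseteq> w) | Q. feasible T p H Q}"
proof -
  have "(\<forall>w\<in>Pow T. (\<exists>e\<in>H. e \<subseteq> w) \<longrightarrow> Q w = 0) \<longleftrightarrow> (\<forall>X\<in>H. forbids T Q X)" for Q
    unfolding forbids_def by blast
  then show ?thesis unfolding pmin_def ev_prob_def feasible_def by simp
qed

lemma pmin_set_bdd_below: "bdd_below {ev_prob T Q (\<lambda>w. X \<subseteq> w) | Q. feasible T p H Q}"
  by (rule bdd_belowI[of _ 0]) (auto simp: feasible_def intro: ev_prob_nonneg interp_pdist)

lemma pmin_le: "feasible T p H Q \<Longrightarrow> pmin T p H X \<le> ev_prob T Q (\<lambda>w. X \<subseteq> w)"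
  unfolding pmin_eq_Inf by (rule cInf_lower[OF _ pmin_set_bdd_below]) auto

lemma pmin_ge:
  "feasible T p H Q0 \<Longrightarrow> (\<And>Q. feasible T p H Q \<Longrightarrow> c \<le> ev_prob T Q (\<lambda>w. X \<subseteq> w)) \<Longrightarrow> c \<le> pmin T p H X"
  unfolding pmin_eq_Inf by (rule cInf_greatest) auto

lemma pmin_approx:
  assumes "feasible T p H Q0" "0 < \<epsilon>"
  obtains Q where "feasible T p H Q" "ev_prob T Q (\<lambda>w. X \<subseteq> w) < pmin T p H X + \<epsilon>"
proof -
  let ?A = "{ev_prob T Q (\<lambda>w. X \<subseteq> w) | Q. feasible T p H Q}"
  have ne: "?A \<noteq> {}" using assms(1) by auto
  have "Inf ?A < pmin T p H X + \<epsilon>" using assms(2) unfolding pmin_eq_Inf by simp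
  then have "\<exists>x\<in>?A. x < pmin T p H X + \<epsilon>" using cInf_less_iff[OF ne pmin_set_bdd_below] by simp
  then show ?thesis using that by auto
qed

lemma pmin_le_approx:
  assumes "\<And>\<epsilon>. 0 < \<epsilon> \<Longrightarrow> \<exists>Q. feasible T p H Q \<and> ev_prob T Q (\<lambda>w. X \<subseteq> w) \<le> c + \<epsilon>"
  shows "pmin T p H X \<le> c"
proof (rule field_le_epsilon)
  fix \<epsilon> :: real assume "0 < \<epsilon>"
  then obtain Q where Q: "feasible T p H Q" "ev_prob T Q (\<lambda>w. X \<subseteq> w) \<le> c + \<epsilon>" using assms by blast
  then show "pmin T p H X \<le> c + \<epsilon>" using pmin_le[OF Q(1), of X] by linarith
qed

lemma pmin_empty_eq_frechet:
  assumes "finite T" "\<forall>t\<in>T. 0 \<le> p t \<and> p t \<le> 1" "X \<subseteq> T"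
  shows "pmin T p {} X = frechet p X"
proof -
  obtain Q where Q: "interp T p Q" "ev_prob T Q (\<lambda>w. X \<subseteq> w) = frechet p X"
    using exists_interp_frechet[OF assms] .
  then have feas: "feasible T p {} Q" unfolding feasible_def by simp
  show ?thesis
  proof (rule antisym)
    show "pmin T p {} X \<le> frechet p X" using pmin_le[OF feas, of X] Q(2) by simp
    show "frechet p X \<le> pmin T p {} X"
      by (rule pmin_ge[OF feas]) (auto simp: feasible_def intro: frechet_le_ev_prob[OF assms(1) _ assms(3)])
  qed
qed

text \<open>Tuples R touching no hyperedge of H can be placed independently of the rest, so the
  Fr\'echet bound for adding them to Y is attained.\<close>
lemma pmin_Un_free:
  assumes fin: "finite T" and p: "\<forall>t\<in>T. 0 \<le> p t \<and> p t \<le> 1" and Q0: "feasible T p H Q0"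
    and Y: "Y \<subseteq> T" and R: "R \<subseteq> T" "Y \<inter> R = {}" and H: "\<forall>X\<in>H. X \<subseteq> T \<and> X \<inter> R = {}"
  shows "pmin T p H (Y \<union> R) = max 0 (pmin T p H Y + frechet p R - 1)"
proof (rule antisym)
  let ?s = "pmin T p H Y"
  show "pmin T p H (Y \<union> R) \<le> max 0 (?s + frechet p R - 1)"
  proof (rule pmin_le_approx)
    fix \<epsilon> :: real assume eps: "0 < \<epsilon>"
    then obtain Q where Q: "feasible T p H Q" "ev_prob T Q (\<lambda>w. Y \<subseteq> w) < ?s + \<epsilon>"
      using pmin_approx[OF Q0] by blast
    have iQ: "interp T p Q" using Q(1) unfolding feasible_def by blast
    obtain Q1 where Q1: "interp (T - R) p Q1" "marginal T Q (T - R) Q1"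
      "\<And>X. X \<subseteq> T - R \<Longrightarrow> forbids T Q X \<Longrightarrow> forbids (T - R) Q1 X"
      using exists_marginal[OF fin iQ, of "T - R"] by blast
    obtain P where P: "interp (T - R \<union> R) p P" "marginal (T - R \<union> R) P (T - R) Q1"
      "ev_prob (T - R \<union> R) P (\<lambda>w. Y \<union> R \<subseteq> w) = max 0 (frechet p R - (1 - ev_prob (T - R) Q1 (\<lambda>w. Y \<subseteq> w)))"
      "ev_prob (T - R \<union> R) P (\<lambda>w. Y \<union> Y \<union> R \<subseteq> w) = max 0 (frechet p R - (1 - ev_prob (T - R) Q1 (\<lambda>w. Y \<union> Y \<subseteq> w)))"
      by (rule glue_frechet_nested[OF _ finite_subset[OF R(1) fin] _ Q1(1), where X=Y and Y=Y]) (use fin p R Y in auto)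
    have TR: "T - R \<union> R = T" using R by auto
    have "feasible T p H P"
      unfolding feasible_def
    proof (intro conjI ballI)
      show "interp T p P" using P(1) TR by simp
      fix X assume "X \<in> H"
      then have "X \<subseteq> T - R" "forbids T Q X" using H Q(1) unfolding feasible_def by auto
      then show "forbids T P X"
        using forbids_marginal[OF _ interp_pdist[OF P(1)] P(2)] Q1(3) fin finite_subset[OF R(1) fin] TR
        by auto
    qed
    moreover have "Y \<subseteq> T - R" using Y R(2) by blast
    then have "ev_prob (T - R) Q1 (\<lambda>w. Y \<subseteq> w) = ev_prob T Q (\<lambda>w. Y \<subseteq> w)"
      by (simp add: marginal_subset_event[OF Q1(2)])
    ultimately show "\<exists>P. feasible T p H P \<and> ev_prob T P (\<lambda>w. Y \<union> R \<subseteq> w) \<le> max 0 (?s + frechet p R - 1) + \<epsilon>"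
      using P(3) Q(2) TR eps by (intro exI[of _ P]) (auto simp: max_def)
  qed
  show "max 0 (?s + frechet p R - 1) \<le> pmin T p H (Y \<union> R)"
  proof (rule pmin_ge[OF Q0])
    fix Q assume Q: "feasible T p H Q"
    then have iQ: "interp T p Q" unfolding feasible_def by blast
    have "ev_prob T Q (\<lambda>w. Y \<subseteq> w) + ev_prob T Q (\<lambda>w. R \<subseteq> w) - 1 \<le> ev_prob T Q (\<lambda>w. Y \<subseteq> w \<and> R \<subseteq> w)"
      by (rule ev_prob_conj_ge[OF fin interp_pdist[OF iQ]])
    moreover have "ev_prob T Q (\<lambda>w. Y \<subseteq> w \<and> R \<subseteq> w) = ev_prob T Q (\<lambda>w. Y \<union> R \<subseteq> w)" by (rule ev_prob_cong) auto
    moreover have "?s \<le> ev_prob T Q (\<lambda>w. Y \<subseteq> w)" by (rule pmin_le[OF Q])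
    moreover have "frechet p R \<le> ev_prob T Q (\<lambda>w. R \<subseteq> w)" by (rule frechet_le_ev_prob[OF fin iQ R(1)])
    moreover have "0 \<le> ev_prob T Q (\<lambda>w. Y \<union> R \<subseteq> w)" by (rule ev_prob_nonneg[OF interp_pdist[OF iQ]])
    ultimately show "max 0 (?s + frechet p R - 1) \<le> ev_prob T Q (\<lambda>w. Y \<union> R \<subseteq> w)" by linarith
  qed
qed

text \<open>\<alpha> is re-glued to the marginal outside \<alpha> so as to avoid the rest of E, and to be present,
  as far as possible, only together with V.\<close>
lemma frechet_reduce:
  assumes fin: "finite T" and p: "\<forall>t\<in>T. 0 \<le> p t \<and> p t \<le> 1" and Q: "feasible T p H Q"
    and H: "\<forall>X\<in>H. X \<subseteq> T" and E: "E \<in> H" "\<alpha> \<subseteq> E" and disj: "\<forall>X\<in>H - {E}. X \<inter> \<alpha> = {}"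
    and V: "V \<subseteq> T - \<alpha>"
  obtains Q' where "feasible T p H Q'" "ev_prob T Q' (\<lambda>w. \<alpha> \<subseteq> w) = frechet p \<alpha>"
    "ev_prob T Q' (\<lambda>w. \<alpha> \<union> V \<subseteq> w) \<le> ev_prob T Q (\<lambda>w. \<alpha> \<union> V \<subseteq> w)"
    "\<And>Z. Z \<subseteq> T - \<alpha> \<Longrightarrow> ev_prob T Q' (\<lambda>w. Z \<subseteq> w) = ev_prob T Q (\<lambda>w. Z \<subseteq> w)"
proof -
  let ?N = "T - \<alpha>" and ?K = "E - \<alpha>"
  have iQ: "interp T p Q" and forbQ: "\<And>X. X \<in> H \<Longrightarrow> forbids T Q X" using Q unfolding feasible_def by auto
  have pd: "pdist T Q" using iQ by (rule interp_pdist)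
  have \<alpha>T: "\<alpha> \<subseteq> T" and KN: "?K \<subseteq> ?N" using H E by auto
  have TN: "?N \<union> \<alpha> = T" using \<alpha>T by auto
  obtain Q1 where Q1: "interp ?N p Q1" "marginal T Q ?N Q1" "\<And>X. X \<subseteq> ?N \<Longrightarrow> forbids T Q X \<Longrightarrow> forbids ?N Q1 X"
    using exists_marginal[OF fin iQ, of ?N] by blast
  have to_Q: "ev_prob ?N Q1 P = ev_prob T Q (\<lambda>w. P (w \<inter> ?N))" for P
    using Q1(2) unfolding marginal_def by simp
  obtain P where P: "interp T p P" "marginal T P ?N Q1" "ev_prob T P (\<lambda>w. \<alpha> \<subseteq> w) = frechet p \<alpha>"
    "ev_prob T P (\<lambda>w. \<alpha> \<subseteq> w \<and> \<not> \<not> V \<subseteq> w \<inter> ?N) \<le> max 0 (frechet p \<alpha> - ev_prob ?N Q1 (\<lambda>w. \<not> V \<subseteq> w \<and> \<not> ?K \<subseteq> w))"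
    "frechet p \<alpha> \<le> 1 - ev_prob ?N Q1 (\<lambda>w. ?K \<subseteq> w) \<Longrightarrow> forbids T P (?K \<union> \<alpha>)"
    using glue_frechet_avoiding[OF _ finite_subset[OF \<alpha>T fin] _ Q1(1) _ KN, where W="\<lambda>w. \<not> V \<subseteq> w"] fin p \<alpha>T
    unfolding TN by auto
  have E_split: "?K \<union> \<alpha> = E" using E(2) by auto
  have "ev_prob ?N Q1 (\<lambda>w. ?K \<subseteq> w) = ev_prob T Q (\<lambda>w. ?K \<subseteq> w)"
    using marginal_subset_event[OF Q1(2) KN] by simp
  then have "frechet p \<alpha> \<le> 1 - ev_prob ?N Q1 (\<lambda>w. ?K \<subseteq> w)"
    using frechet_add_ev_prob_le_1[OF fin iQ \<alpha>T, of ?K] forbQ[OF E(1)] E_split by (simp add: Un_commute)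
  then have forb_E: "forbids T P E" using P(5) E_split by simp
  have "feasible T p H P"
    unfolding feasible_def
  proof (intro conjI ballI)
    fix X assume X: "X \<in> H"
    show "forbids T P X"
    proof (cases "X = E")
      case False
      then have "X \<subseteq> ?N" using X H disj by auto
      then show ?thesis
        using forbids_marginal[OF fin interp_pdist[OF P(1)] P(2)] Q1(3) forbQ[OF X] by blast
    qed (use forb_E in simp)
  qed (rule P(1))
  moreover have "ev_prob T P (\<lambda>w. \<alpha> \<union> V \<subseteq> w) \<le> ev_prob T Q (\<lambda>w. \<alpha> \<union> V \<subseteq> w)"
  proof -
    have "ev_prob T P (\<lambda>w. \<alpha> \<union> V \<subseteq> w) = ev_prob T P (\<lambda>w. \<alpha> \<subseteq> w \<and> \<not> \<not> V \<subseteq> w \<inter> ?N)"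
      using V by (intro ev_prob_cong) auto
    moreover have "ev_prob ?N Q1 (\<lambda>w. \<not> V \<subseteq> w \<and> \<not> ?K \<subseteq> w) = ev_prob T Q (\<lambda>w. \<not> V \<subseteq> w \<and> \<not> ?K \<subseteq> w)"
      using V KN by (subst to_Q) (intro ev_prob_cong, auto)
    moreover have "frechet p \<alpha> \<le> ev_prob T Q (\<lambda>w. \<alpha> \<union> V \<subseteq> w) + ev_prob T Q (\<lambda>w. \<not> V \<subseteq> w \<and> \<not> ?K \<subseteq> w)"
      using frechet_le_ev_prob_avoiding[OF fin iQ \<alpha>T] forbQ[OF E(1)] E_split by (simp add: Un_commute)
    moreover have "0 \<le> ev_prob T Q (\<lambda>w. \<alpha> \<union> V \<subseteq> w)" by (rule ev_prob_nonneg[OF pd])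
    ultimately show ?thesis using P(4) by linarith
  qed
  moreover have "ev_prob T P (\<lambda>w. Z \<subseteq> w) = ev_prob T Q (\<lambda>w. Z \<subseteq> w)" if "Z \<subseteq> ?N" for Z
    using marginal_subset_event[OF P(2) that] marginal_subset_event[OF Q1(2) that] by simp
  ultimately show ?thesis using that P(3) by blast
qed

lemma ears_upper_arith:
  fixes f1 fn w z a S \<epsilon> :: real
  assumes "a \<le> max 0 (f1 - w + z)" "z \<le> S + \<epsilon>" "w \<le> 1 - fn" "0 < \<epsilon>"
  shows "max 0 (fn - 1 + w + a) \<le> max 0 (f1 + fn - (1 - S)) + \<epsilon>"
  using assms by (auto simp: max_def split: if_splits)

locale pdb_chain =
  fixes T :: "'a set" and p :: "'a \<Rightarrow> real" and H :: "'a set set"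
    and e :: "nat \<Rightarrow> 'a set" and n :: nat and b1 bn :: "'a set"
  assumes pdb: "pdb T p" and consistent: "\<exists>Q. feasible T p H Q" and edges: "\<forall>X\<in>H. X \<subseteq> T"
    and chain: "is_chain H e n" and two_edges: "1 < n"
    and b1: "b1 \<subseteq> ears e n 1" and bn: "bn \<subseteq> ears e n n"
begin

abbreviation "A1 \<equiv> alpha e 1"
abbreviation "An \<equiv> alpha e (n - 1)"
abbreviation "B1 \<equiv> ears e n 1"
abbreviation "Bn \<equiv> ears e n n"
abbreviation "R1 \<equiv> B1 - b1"
abbreviation "Rn \<equiv> Bn - bn"
abbreviation "M \<equiv> T - B1 - Bn"

lemma finite_T: "finite T" and prob: "\<forall>t\<in>T. 0 \<le> p t \<and> p t \<le> 1"
  using pdb unfolding pdb_def by auto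

lemma H_eq: "H = e ` {1..n}" and edge_in_T: "i \<in> {1..n} \<Longrightarrow> e i \<subseteq> T"
  using chain edges unfolding is_chain_def by auto

lemma edges_disjoint:
  "i \<in> {1..n} \<Longrightarrow> j \<in> {1..n} \<Longrightarrow> i \<noteq> j \<Longrightarrow> i \<noteq> Suc j \<Longrightarrow> j \<noteq> Suc i \<Longrightarrow> e i \<inter> e j = {}"
  using chain unfolding is_chain_def by blast

lemma end_edge_eq:
  assumes "i \<in> {1..n}" "j \<in> {1..n}" "j \<noteq> i" "\<And>k. k \<in> {1..n} \<Longrightarrow> k \<noteq> i \<Longrightarrow> k \<noteq> j \<Longrightarrow> e i \<inter> e k = {}"
  shows "e i = (e i \<inter> e j) \<union> ears e n i"
  using assms unfolding ears_def by blast

lemma e1_eq: "e 1 = A1 \<union> B1"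
proof -
  have "e 1 \<inter> e k = {}" if "k \<in> {1..n}" "k \<noteq> 1" "k \<noteq> 2" for k
    using that two_edges by (intro edges_disjoint) auto
  then have "e 1 = (e 1 \<inter> e 2) \<union> B1" using two_edges by (intro end_edge_eq) auto
  then show ?thesis by (simp add: alpha_def numeral_2_eq_2)
qed

lemma en_eq: "e n = An \<union> Bn"
proof -
  have "e n \<inter> e k = {}" if "k \<in> {1..n}" "k \<noteq> n" "k \<noteq> n - 1" for k
    using that two_edges by (intro edges_disjoint) auto
  then have "e n = (e n \<inter> e (n - 1)) \<union> Bn" using two_edges by (intro end_edge_eq) auto
  then show ?thesis using two_edges by (simp add: alpha_def Int_commute)
qed

lemma ears_disjoint: "i \<in> {1..n} \<Longrightarrow> j \<in> {1..n} \<Longrightarrow> i \<noteq> j \<Longrightarrow> ears e n i \<inter> e j = {}"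
  unfolding ears_def by auto

lemma ears_subset: "ears e n i \<subseteq> e i"
  unfolding ears_def by auto

lemma e1_T: "e 1 \<subseteq> T" and en_T: "e n \<subseteq> T"
  using edge_in_T two_edges by auto

lemma B1_T: "B1 \<subseteq> T" and Bn_T: "Bn \<subseteq> T" and b1_T: "b1 \<subseteq> T" and bn_T: "bn \<subseteq> T"
  using ears_subset[of 1] ears_subset[of n] e1_T en_T b1 bn by blast+

lemma B1_Bn: "B1 \<inter> Bn = {}"
  using ears_disjoint[of 1 n] ears_subset[of n] two_edges by auto

lemma A1_edges: "A1 \<subseteq> e 1" "A1 \<subseteq> e 2" and An_edges: "An \<subseteq> e (n - 1)" "An \<subseteq> e n"
  using two_edges unfolding alpha_def by (auto simp: numeral_2_eq_2)

lemma A1_M: "A1 \<subseteq> M"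
proof -
  have "B1 \<inter> e 2 = {}" "Bn \<inter> e 1 = {}" using two_edges by (intro ears_disjoint; simp)+
  then show ?thesis using A1_edges e1_T by blast
qed

lemma An_M: "An \<subseteq> M"
proof -
  have "B1 \<inter> e n = {}" "Bn \<inter> e (n - 1) = {}" using two_edges by (intro ears_disjoint; simp)+
  then show ?thesis using An_edges en_T by blast
qed

lemma sub_H: "sub e n \<subseteq> H"
  unfolding sub_def H_eq by auto

lemma sub_M: "X \<in> sub e n \<Longrightarrow> X \<subseteq> M"
proof -
  assume "X \<in> sub e n"
  then obtain i where i: "i \<in> {2..n - 1}" "X = e i" unfolding sub_def by blast
  then have "i \<in> {1..n}" "i \<noteq> 1" "i \<noteq> n" by auto
  then show ?thesis using i(2) ears_disjoint[of 1 i] ears_disjoint[of n i] edge_in_T[of i] two_edges by auto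
qed

lemma feasible_sub: "feasible T p H Q \<Longrightarrow> feasible T p (sub e n) Q"
  using feasible_mono sub_H by blast

lemma feasible_forbids_edge: "feasible T p H Q \<Longrightarrow> i \<in> {1..n} \<Longrightarrow> forbids T Q (e i)"
  unfolding feasible_def H_eq by blast

lemma feasible_chainI:
  assumes "interp T p Q" "forbids T Q (e n)" "\<forall>X\<in>insert (e 1) (sub e n). forbids T Q X"
  shows "feasible T p H Q"
  unfolding feasible_def H_eq
proof (intro conjI ballI)
  fix X assume "X \<in> e ` {1..n}"
  then obtain i where i: "i \<in> {1..n}" "X = e i" by blast
  then have "i = n \<or> i = 1 \<or> i \<in> {2..n - 1}" by auto
  then show "forbids T Q X" using assms(2,3) i unfolding sub_def by auto
qed (rule assms(1))

lemma B1_eq: "B1 = b1 \<union> R1" and Bn_eq: "Bn = bn \<union> Rn"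
  using b1 bn by auto

lemma frechet_ears_le_ev_prob:
  assumes Q: "feasible T p H Q"
  shows "frechet p b1 + frechet p bn - (1 - pmin T p (sub e n) (A1 \<union> R1 \<union> An \<union> Rn))
    \<le> ev_prob T Q (\<lambda>w. b1 \<union> bn \<subseteq> w)"
proof -
  let ?X = "A1 \<union> R1 \<union> An \<union> Rn"
  have iQ: "interp T p Q" using Q unfolding feasible_def by blast
  have pd: "pdist T Q" using iQ by (rule interp_pdist)
  have "ev_prob T Q (\<lambda>w. (b1 \<subseteq> w \<or> bn \<subseteq> w) \<and> ?X \<subseteq> w) = 0"
  proof (rule ev_prob_zero)
    fix w assume w: "w \<subseteq> T" "(b1 \<subseteq> w \<or> bn \<subseteq> w) \<and> ?X \<subseteq> w"
    then have "e 1 \<subseteq> w \<or> e n \<subseteq> w" using e1_eq en_eq B1_eq Bn_eq by blast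
    moreover have "forbids T Q (e 1)" "forbids T Q (e n)" using feasible_forbids_edge[OF Q] two_edges by auto
    ultimately show "Q w = 0" using w(1) unfolding forbids_def by blast
  qed
  then have "ev_prob T Q (\<lambda>w. b1 \<subseteq> w) + ev_prob T Q (\<lambda>w. bn \<subseteq> w) + ev_prob T Q (\<lambda>w. ?X \<subseteq> w) - 1
      \<le> ev_prob T Q (\<lambda>w. b1 \<subseteq> w \<and> bn \<subseteq> w)"
    by (rule ev_prob_conj_ge_excluding[OF finite_T pd])
  moreover have "ev_prob T Q (\<lambda>w. b1 \<subseteq> w \<and> bn \<subseteq> w) = ev_prob T Q (\<lambda>w. b1 \<union> bn \<subseteq> w)"
    by (rule ev_prob_cong) auto
  moreover have "frechet p b1 \<le> ev_prob T Q (\<lambda>w. b1 \<subseteq> w)" "frechet p bn \<le> ev_prob T Q (\<lambda>w. bn \<subseteq> w)"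
    using frechet_le_ev_prob[OF finite_T iQ] b1_T bn_T by auto
  moreover have "pmin T p (sub e n) ?X \<le> ev_prob T Q (\<lambda>w. ?X \<subseteq> w)"
    by (rule pmin_le[OF feasible_sub[OF Q]])
  ultimately show ?thesis by linarith
qed

lemma exists_frechet_inner_ends:
  assumes "0 < \<epsilon>"
  obtains Q where "feasible T p (sub e n) Q"
    "ev_prob T Q (\<lambda>w. A1 \<subseteq> w) = frechet p A1" "ev_prob T Q (\<lambda>w. An \<subseteq> w) = frechet p An"
    "ev_prob T Q (\<lambda>w. A1 \<union> An \<subseteq> w) < pmin T p (sub e n) (A1 \<union> An) + \<epsilon>"
proof (cases "n = 2")
  case True
  then have "An = A1" "sub e n = {}" unfolding sub_def by auto
  moreover have A1_T: "A1 \<subseteq> T" using A1_M by blast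
  moreover obtain Q where "interp T p Q" "ev_prob T Q (\<lambda>w. A1 \<subseteq> w) = frechet p A1"
    using exists_interp_frechet[OF finite_T prob A1_T] by blast
  ultimately show ?thesis
    using that[of Q] pmin_empty_eq_frechet[OF finite_T prob A1_T] assms by (auto simp: feasible_def)
next
  case False
  then have n3: "3 \<le> n" using two_edges by auto
  let ?S = "sub e n"
  have S_T: "\<forall>X\<in>?S. X \<subseteq> T" using sub_M by blast
  obtain Qc where "feasible T p H Qc" using consistent by blast
  then obtain Q0 where Q0: "feasible T p ?S Q0" "ev_prob T Q0 (\<lambda>w. A1 \<union> An \<subseteq> w) < pmin T p ?S (A1 \<union> An) + \<epsilon>"
    using pmin_approx[OF feasible_sub assms] by blast
  have A1_An: "A1 \<inter> An = {}" using edges_disjoint[of 1 n] n3 A1_edges An_edges by force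
  have A1_T: "A1 \<subseteq> T - An" and An_T: "An \<subseteq> T - A1" using A1_M An_M A1_An by blast+
  have in_S: "e 2 \<in> ?S" "e (n - 1) \<in> ?S" using n3 unfolding sub_def by auto
  have disj1: "\<forall>X\<in>?S - {e 2}. X \<inter> A1 = {}"
  proof
    fix X assume X: "X \<in> ?S - {e 2}"
    obtain i where "i \<in> {2..n - 1}" "X = e i" "i \<noteq> 2" using X unfolding sub_def by blast
    moreover from this have "e 1 \<inter> e i = {}" by (intro edges_disjoint) auto
    ultimately show "X \<inter> A1 = {}" using A1_edges(1) by blast
  qed
  obtain Q1 where Q1: "feasible T p ?S Q1" "ev_prob T Q1 (\<lambda>w. A1 \<subseteq> w) = frechet p A1"
    "ev_prob T Q1 (\<lambda>w. A1 \<union> An \<subseteq> w) \<le> ev_prob T Q0 (\<lambda>w. A1 \<union> An \<subseteq> w)"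
    "\<And>Z. Z \<subseteq> T - A1 \<Longrightarrow> ev_prob T Q1 (\<lambda>w. Z \<subseteq> w) = ev_prob T Q0 (\<lambda>w. Z \<subseteq> w)"
    by (rule frechet_reduce[OF finite_T prob Q0(1) S_T in_S(1) A1_edges(2) disj1 An_T]) blast
  have disjn: "\<forall>X\<in>?S - {e (n - 1)}. X \<inter> An = {}"
  proof
    fix X assume X: "X \<in> ?S - {e (n - 1)}"
    obtain i where "i \<in> {2..n - 1}" "X = e i" "i \<noteq> n - 1" using X unfolding sub_def by blast
    moreover from this have "e n \<inter> e i = {}" by (intro edges_disjoint) auto
    ultimately show "X \<inter> An = {}" using An_edges(2) by blast
  qed
  obtain Q2 where Q2: "feasible T p ?S Q2" "ev_prob T Q2 (\<lambda>w. An \<subseteq> w) = frechet p An"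
    "ev_prob T Q2 (\<lambda>w. An \<union> A1 \<subseteq> w) \<le> ev_prob T Q1 (\<lambda>w. An \<union> A1 \<subseteq> w)"
    "\<And>Z. Z \<subseteq> T - An \<Longrightarrow> ev_prob T Q2 (\<lambda>w. Z \<subseteq> w) = ev_prob T Q1 (\<lambda>w. Z \<subseteq> w)"
    by (rule frechet_reduce[OF finite_T prob Q1(1) S_T in_S(2) An_edges(1) disjn A1_T]) blast
  show ?thesis
    using that[OF Q2(1)] Q2(2,3) Q2(4)[OF A1_T] Q1(2,3) Q0(2) by (simp add: Un_commute)
qed


lemma finite_parts: "finite M" "finite R1" "finite Rn" "finite b1" "finite bn"
  using finite_T B1_T Bn_T b1_T bn_T by (auto intro: finite_subset)

lemma prob_parts: "\<forall>t\<in>R1. 0 \<le> p t \<and> p t \<le> 1" "\<forall>t\<in>Rn. 0 \<le> p t \<and> p t \<le> 1"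
    "\<forall>t\<in>b1. 0 \<le> p t \<and> p t \<le> 1" "\<forall>t\<in>bn. 0 \<le> p t \<and> p t \<le> 1"
  using prob B1_T Bn_T b1_T bn_T by blast+

lemma glue_ear_rests:
  assumes Q: "interp M p Q" and forb: "\<forall>X\<in>sub e n. forbids M Q X"
  obtains P where "interp (M \<union> R1 \<union> Rn) p P" "\<forall>X\<in>sub e n. forbids (M \<union> R1 \<union> Rn) P X"
    "ev_prob (M \<union> R1 \<union> Rn) P (\<lambda>w. A1 \<union> R1 \<subseteq> w) = max 0 (frechet p R1 - (1 - ev_prob M Q (\<lambda>w. A1 \<subseteq> w)))"
    "ev_prob (M \<union> R1 \<union> Rn) P (\<lambda>w. An \<union> Rn \<subseteq> w) = max 0 (frechet p Rn - (1 - ev_prob M Q (\<lambda>w. An \<subseteq> w)))"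
    "ev_prob (M \<union> R1 \<union> Rn) P (\<lambda>w. A1 \<union> R1 \<union> (An \<union> Rn) \<subseteq> w)
       = max 0 (frechet p Rn - (1 - max 0 (frechet p R1 - (1 - ev_prob M Q (\<lambda>w. A1 \<union> An \<subseteq> w)))))"
proof -
  have disj: "M \<inter> R1 = {}" "(M \<union> R1) \<inter> Rn = {}" using B1_Bn by auto
  obtain P1 where P1: "interp (M \<union> R1) p P1" "marginal (M \<union> R1) P1 M Q"
    "ev_prob (M \<union> R1) P1 (\<lambda>w. A1 \<union> R1 \<subseteq> w) = max 0 (frechet p R1 - (1 - ev_prob M Q (\<lambda>w. A1 \<subseteq> w)))"
    "ev_prob (M \<union> R1) P1 (\<lambda>w. A1 \<union> An \<union> R1 \<subseteq> w) = max 0 (frechet p R1 - (1 - ev_prob M Q (\<lambda>w. A1 \<union> An \<subseteq> w)))"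
    by (rule glue_frechet_nested[OF finite_parts(1,2) disj(1) Q prob_parts(1) A1_M An_M])
  have fin1: "finite (M \<union> R1)" using finite_parts by simp
  have An_MR: "An \<subseteq> M \<union> R1" and A1R1_MR: "A1 \<union> R1 \<subseteq> M \<union> R1" using A1_M An_M by auto
  obtain P2 where P2: "interp (M \<union> R1 \<union> Rn) p P2" "marginal (M \<union> R1 \<union> Rn) P2 (M \<union> R1) P1"
    "ev_prob (M \<union> R1 \<union> Rn) P2 (\<lambda>w. An \<union> Rn \<subseteq> w) = max 0 (frechet p Rn - (1 - ev_prob (M \<union> R1) P1 (\<lambda>w. An \<subseteq> w)))"
    "ev_prob (M \<union> R1 \<union> Rn) P2 (\<lambda>w. An \<union> (A1 \<union> R1) \<union> Rn \<subseteq> w)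
       = max 0 (frechet p Rn - (1 - ev_prob (M \<union> R1) P1 (\<lambda>w. An \<union> (A1 \<union> R1) \<subseteq> w)))"
    by (rule glue_frechet_nested[OF fin1 finite_parts(3) disj(2) P1(1) prob_parts(2) An_MR A1R1_MR])
  show ?thesis
  proof
    show "interp (M \<union> R1 \<union> Rn) p P2" by (rule P2(1))
    show "\<forall>X\<in>sub e n. forbids (M \<union> R1 \<union> Rn) P2 X"
    proof
      fix X assume X: "X \<in> sub e n"
      then have "forbids (M \<union> R1) P1 X"
        using forbids_marginal[OF fin1 interp_pdist[OF P1(1)] P1(2) sub_M] forb by blast
      then show "forbids (M \<union> R1 \<union> Rn) P2 X"
        using forbids_marginal[OF _ interp_pdist[OF P2(1)] P2(2)] sub_M[OF X] fin1 finite_parts(3) by blast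
    qed
    show "ev_prob (M \<union> R1 \<union> Rn) P2 (\<lambda>w. A1 \<union> R1 \<subseteq> w) = max 0 (frechet p R1 - (1 - ev_prob M Q (\<lambda>w. A1 \<subseteq> w)))"
      using marginal_subset_event[OF P2(2) A1R1_MR] P1(3) by simp
    show "ev_prob (M \<union> R1 \<union> Rn) P2 (\<lambda>w. An \<union> Rn \<subseteq> w) = max 0 (frechet p Rn - (1 - ev_prob M Q (\<lambda>w. An \<subseteq> w)))"
      using marginal_subset_event[OF P1(2) An_M] P2(3) by simp
    have "ev_prob (M \<union> R1) P1 (\<lambda>w. An \<union> (A1 \<union> R1) \<subseteq> w) = ev_prob (M \<union> R1) P1 (\<lambda>w. A1 \<union> An \<union> R1 \<subseteq> w)"
      by (rule ev_prob_cong) auto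
    moreover have "ev_prob (M \<union> R1 \<union> Rn) P2 (\<lambda>w. An \<union> (A1 \<union> R1) \<union> Rn \<subseteq> w)
        = ev_prob (M \<union> R1 \<union> Rn) P2 (\<lambda>w. A1 \<union> R1 \<union> (An \<union> Rn) \<subseteq> w)"
      by (rule ev_prob_cong) auto
    ultimately show "ev_prob (M \<union> R1 \<union> Rn) P2 (\<lambda>w. A1 \<union> R1 \<union> (An \<union> Rn) \<subseteq> w)
       = max 0 (frechet p Rn - (1 - max 0 (frechet p R1 - (1 - ev_prob M Q (\<lambda>w. A1 \<union> An \<subseteq> w)))))"
      using P2(4) P1(4) by simp
  qed
qed


lemma glue_b1:
  assumes P: "interp (M \<union> R1 \<union> Rn) p P" "\<forall>X\<in>sub e n. forbids (M \<union> R1 \<union> Rn) P X"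
    and cond: "ev_prob (M \<union> R1 \<union> Rn) P (\<lambda>w. A1 \<union> R1 \<subseteq> w) \<le> 1 - frechet p b1"
  obtains P' where "interp (M \<union> R1 \<union> Rn \<union> b1) p P'"
    "\<forall>X\<in>insert (e 1) (sub e n). forbids (M \<union> R1 \<union> Rn \<union> b1) P' X"
    "ev_prob (M \<union> R1 \<union> Rn \<union> b1) P' (\<lambda>w. An \<union> Rn \<subseteq> w) = ev_prob (M \<union> R1 \<union> Rn) P (\<lambda>w. An \<union> Rn \<subseteq> w)"
    "ev_prob (M \<union> R1 \<union> Rn \<union> b1) P' (\<lambda>w. b1 \<subseteq> w \<and> \<not> An \<union> Rn \<subseteq> w)
       \<le> max 0 (frechet p b1 - ev_prob (M \<union> R1 \<union> Rn) P (\<lambda>w. An \<union> Rn \<subseteq> w)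
                + ev_prob (M \<union> R1 \<union> Rn) P (\<lambda>w. A1 \<union> R1 \<union> (An \<union> Rn) \<subseteq> w))"
proof -
  let ?N = "M \<union> R1 \<union> Rn"
  have fin: "finite ?N" using finite_parts by simp
  have disj: "?N \<inter> b1 = {}" using b1 B1_Bn by auto
  have K: "A1 \<union> R1 \<subseteq> ?N" and W: "An \<union> Rn \<subseteq> ?N" using A1_M An_M by auto
  obtain P' where P': "interp (?N \<union> b1) p P'" "marginal (?N \<union> b1) P' ?N P"
    "ev_prob (?N \<union> b1) P' (\<lambda>w. b1 \<subseteq> w) = frechet p b1"
    "ev_prob (?N \<union> b1) P' (\<lambda>w. b1 \<subseteq> w \<and> \<not> An \<union> Rn \<subseteq> w \<inter> ?N)
       \<le> max 0 (frechet p b1 - ev_prob ?N P (\<lambda>w. An \<union> Rn \<subseteq> w \<and> \<not> A1 \<union> R1 \<subseteq> w))"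
    "frechet p b1 \<le> 1 - ev_prob ?N P (\<lambda>w. A1 \<union> R1 \<subseteq> w) \<Longrightarrow> forbids (?N \<union> b1) P' (A1 \<union> R1 \<union> b1)"
    by (rule glue_frechet_avoiding[OF fin finite_parts(4) disj P(1) prob_parts(3) K, where W="\<lambda>w. An \<union> Rn \<subseteq> w"]) blast
  have fin': "finite (?N \<union> b1)" using fin finite_parts by simp
  show ?thesis
  proof
    show "interp (?N \<union> b1) p P'" by (rule P'(1))
    show "\<forall>X\<in>insert (e 1) (sub e n). forbids (?N \<union> b1) P' X"
    proof
      fix X assume "X \<in> insert (e 1) (sub e n)"
      then consider "X = A1 \<union> R1 \<union> b1" | "X \<in> sub e n" using e1_eq B1_eq by auto
      then show "forbids (?N \<union> b1) P' X"
      proof cases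
        case 2
        then have "X \<subseteq> ?N" using sub_M by blast
        then show ?thesis using forbids_marginal[OF fin' interp_pdist[OF P'(1)] P'(2)] P(2) 2 by blast
      qed (use P'(5) cond in simp)
    qed
    show "ev_prob (?N \<union> b1) P' (\<lambda>w. An \<union> Rn \<subseteq> w) = ev_prob ?N P (\<lambda>w. An \<union> Rn \<subseteq> w)"
      by (rule marginal_subset_event[OF P'(2) W])
    have "ev_prob ?N P (\<lambda>w. An \<union> Rn \<subseteq> w) = ev_prob ?N P (\<lambda>w. An \<union> Rn \<subseteq> w \<and> A1 \<union> R1 \<subseteq> w)
        + ev_prob ?N P (\<lambda>w. An \<union> Rn \<subseteq> w \<and> \<not> A1 \<union> R1 \<subseteq> w)"
      by (rule ev_prob_split[OF fin])
    moreover have "ev_prob ?N P (\<lambda>w. An \<union> Rn \<subseteq> w \<and> A1 \<union> R1 \<subseteq> w) = ev_prob ?N P (\<lambda>w. A1 \<union> R1 \<union> (An \<union> Rn) \<subseteq> w)"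
      by (rule ev_prob_cong) auto
    moreover have "ev_prob (?N \<union> b1) P' (\<lambda>w. b1 \<subseteq> w \<and> \<not> An \<union> Rn \<subseteq> w)
        = ev_prob (?N \<union> b1) P' (\<lambda>w. b1 \<subseteq> w \<and> \<not> An \<union> Rn \<subseteq> w \<inter> ?N)"
      using W by (intro ev_prob_cong) auto
    ultimately show "ev_prob (?N \<union> b1) P' (\<lambda>w. b1 \<subseteq> w \<and> \<not> An \<union> Rn \<subseteq> w)
       \<le> max 0 (frechet p b1 - ev_prob ?N P (\<lambda>w. An \<union> Rn \<subseteq> w) + ev_prob ?N P (\<lambda>w. A1 \<union> R1 \<union> (An \<union> Rn) \<subseteq> w))"
      using P'(4) by simp
  qed
qed

lemma glue_bn:
  assumes P: "interp (M \<union> R1 \<union> Rn \<union> b1) p P" "\<forall>X\<in>insert (e 1) (sub e n). forbids (M \<union> R1 \<union> Rn \<union> b1) P X"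
    and cond: "ev_prob (M \<union> R1 \<union> Rn \<union> b1) P (\<lambda>w. An \<union> Rn \<subseteq> w) \<le> 1 - frechet p bn"
  obtains Q where "feasible T p H Q"
    "ev_prob T Q (\<lambda>w. b1 \<union> bn \<subseteq> w) \<le> max 0 (frechet p bn - 1 + ev_prob (M \<union> R1 \<union> Rn \<union> b1) P (\<lambda>w. An \<union> Rn \<subseteq> w)
       + ev_prob (M \<union> R1 \<union> Rn \<union> b1) P (\<lambda>w. b1 \<subseteq> w \<and> \<not> An \<union> Rn \<subseteq> w))"
proof -
  let ?N = "M \<union> R1 \<union> Rn \<union> b1"
  have fin: "finite ?N" using finite_parts by simp
  have pd: "pdist ?N P" using P(1) by (rule interp_pdist)
  have disj: "?N \<inter> bn = {}" using b1 bn B1_Bn by auto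
  have K: "An \<union> Rn \<subseteq> ?N" using An_M by auto
  have T_eq: "?N \<union> bn = T" using B1_eq Bn_eq B1_T Bn_T by auto
  obtain Q where Q: "interp (?N \<union> bn) p Q" "marginal (?N \<union> bn) Q ?N P"
    "ev_prob (?N \<union> bn) Q (\<lambda>w. bn \<subseteq> w) = frechet p bn"
    "ev_prob (?N \<union> bn) Q (\<lambda>w. bn \<subseteq> w \<and> \<not> \<not> b1 \<subseteq> w \<inter> ?N)
       \<le> max 0 (frechet p bn - ev_prob ?N P (\<lambda>w. \<not> b1 \<subseteq> w \<and> \<not> An \<union> Rn \<subseteq> w))"
    "frechet p bn \<le> 1 - ev_prob ?N P (\<lambda>w. An \<union> Rn \<subseteq> w) \<Longrightarrow> forbids (?N \<union> bn) Q (An \<union> Rn \<union> bn)"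
    by (rule glue_frechet_avoiding[OF fin finite_parts(5) disj P(1) prob_parts(4) K, where W="\<lambda>w. \<not> b1 \<subseteq> w"]) blast
  note Q = Q[unfolded T_eq]
  have "\<forall>X\<in>insert (e 1) (sub e n). forbids T Q X"
  proof
    fix X assume X: "X \<in> insert (e 1) (sub e n)"
    moreover have "e 1 \<subseteq> ?N" using e1_eq A1_M B1_eq by auto
    ultimately have "X \<subseteq> ?N" using sub_M by blast
    then show "forbids T Q X" using forbids_marginal[OF finite_T interp_pdist[OF Q(1)] Q(2)] P(2) X by blast
  qed
  moreover have "e n = An \<union> Rn \<union> bn" using en_eq Bn_eq by auto
  then have "forbids T Q (e n)" using Q(5) cond by simp
  ultimately have "feasible T p H Q" by (intro feasible_chainI[OF Q(1)])
  moreover have "ev_prob T Q (\<lambda>w. b1 \<union> bn \<subseteq> w) = ev_prob T Q (\<lambda>w. bn \<subseteq> w \<and> \<not> \<not> b1 \<subseteq> w \<inter> ?N)"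
    using b1_T by (intro ev_prob_cong) auto
  moreover have "ev_prob ?N P (\<lambda>w. \<not> b1 \<subseteq> w \<and> \<not> An \<union> Rn \<subseteq> w)
      = 1 - ev_prob ?N P (\<lambda>w. An \<union> Rn \<subseteq> w) - ev_prob ?N P (\<lambda>w. b1 \<subseteq> w \<and> \<not> An \<union> Rn \<subseteq> w)"
  proof -
    have "ev_prob ?N P (\<lambda>w. \<not> An \<union> Rn \<subseteq> w) = ev_prob ?N P (\<lambda>w. \<not> An \<union> Rn \<subseteq> w \<and> b1 \<subseteq> w)
        + ev_prob ?N P (\<lambda>w. \<not> An \<union> Rn \<subseteq> w \<and> \<not> b1 \<subseteq> w)"
      by (rule ev_prob_split[OF fin])
    then show ?thesis using ev_prob_compl[OF fin pd, of "\<lambda>w. An \<union> Rn \<subseteq> w"]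
      by (simp add: conj_commute)
  qed
  ultimately show ?thesis using that Q(4) by (simp add: algebra_simps)
qed


lemma frechet_end_edge:
  assumes "i \<in> {1..n}" "e i = X \<union> Y \<union> Z" "Y \<inter> Z = {}"
  shows "max 0 (frechet p Z - (1 - frechet p X)) \<le> 1 - frechet p Y"
proof -
  obtain Q where Q: "feasible T p H Q" using consistent by blast
  have XYZ: "X \<subseteq> T" "Y \<subseteq> T" "Z \<subseteq> T" using edge_in_T[OF assms(1)] assms(2) by auto
  then have fin: "finite Y" "finite Z" using finite_T by (auto intro: finite_subset)
  have "forbids T Q (X \<union> (Y \<union> Z))"
    using feasible_forbids_edge[OF Q assms(1)] assms(2) by (simp add: Un_assoc)
  then have "frechet p X + ev_prob T Q (\<lambda>w. Y \<union> Z \<subseteq> w) \<le> 1"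
    using Q XYZ unfolding feasible_def by (intro frechet_add_ev_prob_le_1[OF finite_T]) auto
  moreover have "frechet p (Y \<union> Z) \<le> ev_prob T Q (\<lambda>w. Y \<union> Z \<subseteq> w)"
    using Q XYZ unfolding feasible_def by (intro frechet_le_ev_prob[OF finite_T]) auto
  moreover have "frechet p Y + frechet p Z - 1 \<le> frechet p (Y \<union> Z)"
    using fin assms(3) prob XYZ by (intro frechet_Un_ge) auto
  moreover have "frechet p Y \<le> 1" using frechet_bounds[of Y p] prob XYZ by auto
  ultimately show ?thesis by (simp add: max_def)
qed

lemma pmin_inner:
  "pmin T p (sub e n) (A1 \<union> R1 \<union> An \<union> Rn) = max 0 (pmin T p (sub e n) (A1 \<union> An) + frechet p (R1 \<union> Rn) - 1)"
proof -
  have "A1 \<union> R1 \<union> An \<union> Rn = (A1 \<union> An) \<union> (R1 \<union> Rn)" by auto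
  moreover obtain Q where "feasible T p H Q" using consistent by blast
  ultimately show ?thesis
    using A1_M An_M B1_T Bn_T sub_M
    by (simp only:) (rule pmin_Un_free[OF finite_T prob feasible_sub]; blast)
qed


lemma exists_glued_ear_rests:
  assumes eps: "0 < \<epsilon>"
  obtains P where "interp (M \<union> R1 \<union> Rn) p P" "\<forall>X\<in>sub e n. forbids (M \<union> R1 \<union> Rn) P X"
    "ev_prob (M \<union> R1 \<union> Rn) P (\<lambda>w. A1 \<union> R1 \<subseteq> w) \<le> 1 - frechet p b1"
    "ev_prob (M \<union> R1 \<union> Rn) P (\<lambda>w. An \<union> Rn \<subseteq> w) \<le> 1 - frechet p bn"
    "ev_prob (M \<union> R1 \<union> Rn) P (\<lambda>w. A1 \<union> R1 \<union> (An \<union> Rn) \<subseteq> w)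
       \<le> max 0 (pmin T p (sub e n) (A1 \<union> An) + frechet p (R1 \<union> Rn) - 1) + \<epsilon>"
proof -
  obtain Q0 where Q0: "feasible T p (sub e n) Q0"
    "ev_prob T Q0 (\<lambda>w. A1 \<subseteq> w) = frechet p A1" "ev_prob T Q0 (\<lambda>w. An \<subseteq> w) = frechet p An"
    "ev_prob T Q0 (\<lambda>w. A1 \<union> An \<subseteq> w) < pmin T p (sub e n) (A1 \<union> An) + \<epsilon>"
    using exists_frechet_inner_ends[OF eps] by blast
  obtain QM where QM: "interp M p QM" "marginal T Q0 M QM" "\<And>X. X \<subseteq> M \<Longrightarrow> forbids T Q0 X \<Longrightarrow> forbids M QM X"
    using exists_marginal[OF finite_T, of p Q0 M] Q0(1) unfolding feasible_def by blast
  have QM_forb: "\<forall>X\<in>sub e n. forbids M QM X" using QM(3) sub_M Q0(1) unfolding feasible_def by blast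
  have A1An_M: "A1 \<union> An \<subseteq> M" using A1_M An_M by blast
  note QM_vals = marginal_subset_event[OF QM(2) A1_M, symmetric, unfolded Q0(2)]
    marginal_subset_event[OF QM(2) An_M, symmetric, unfolded Q0(3)]
    marginal_subset_event[OF QM(2) A1An_M, symmetric]
  obtain P where P: "interp (M \<union> R1 \<union> Rn) p P" "\<forall>X\<in>sub e n. forbids (M \<union> R1 \<union> Rn) P X"
    "ev_prob (M \<union> R1 \<union> Rn) P (\<lambda>w. A1 \<union> R1 \<subseteq> w) = max 0 (frechet p R1 - (1 - ev_prob M QM (\<lambda>w. A1 \<subseteq> w)))"
    "ev_prob (M \<union> R1 \<union> Rn) P (\<lambda>w. An \<union> Rn \<subseteq> w) = max 0 (frechet p Rn - (1 - ev_prob M QM (\<lambda>w. An \<subseteq> w)))"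
    "ev_prob (M \<union> R1 \<union> Rn) P (\<lambda>w. A1 \<union> R1 \<union> (An \<union> Rn) \<subseteq> w)
       = max 0 (frechet p Rn - (1 - max 0 (frechet p R1 - (1 - ev_prob M QM (\<lambda>w. A1 \<union> An \<subseteq> w)))))"
    by (rule glue_ear_rests[OF QM(1) QM_forb])
  note P = P[unfolded QM_vals]
  have F: "frechet p R1 + frechet p Rn - 1 \<le> frechet p (R1 \<union> Rn)"
    using finite_parts B1_Bn prob B1_T Bn_T by (intro frechet_Un_ge) auto
  have "\<forall>t\<in>R1 \<union> Rn. p t \<le> 1" using prob B1_T Bn_T by blast
  then have "0 \<le> frechet p (R1 \<union> Rn)" "frechet p Rn \<le> 1"
    using frechet_bounds[of "R1 \<union> Rn" p] frechet_bounds[of Rn p] by auto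
  then have z: "max 0 (frechet p Rn - (1 - max 0 (frechet p R1 - (1 - ev_prob T Q0 (\<lambda>w. A1 \<union> An \<subseteq> w)))))
      \<le> max 0 (pmin T p (sub e n) (A1 \<union> An) + frechet p (R1 \<union> Rn) - 1) + \<epsilon>"
    using F Q0(4) eps by (auto simp: max_def split: if_splits)
  have cond1: "ev_prob (M \<union> R1 \<union> Rn) P (\<lambda>w. A1 \<union> R1 \<subseteq> w) \<le> 1 - frechet p b1"
    using P(3) frechet_end_edge[of 1 A1 b1 R1] e1_eq B1_eq two_edges by auto
  have condn: "ev_prob (M \<union> R1 \<union> Rn) P (\<lambda>w. An \<union> Rn \<subseteq> w) \<le> 1 - frechet p bn"
    using P(4) frechet_end_edge[of n An bn Rn] en_eq Bn_eq two_edges by auto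
  show ?thesis by (rule that[OF P(1,2) cond1 condn]) (unfold P(5), rule z)
qed

text \<open>Glue b1 so that it avoids A1 \<union> R1 and prefers the worlds containing An \<union> Rn, then bn so that
  it avoids An \<union> Rn and prefers the worlds without b1.\<close>
lemma exists_feasible_ears_upper:
  assumes eps: "0 < \<epsilon>"
  shows "\<exists>Q. feasible T p H Q \<and> ev_prob T Q (\<lambda>w. b1 \<union> bn \<subseteq> w)
    \<le> max 0 (frechet p b1 + frechet p bn - (1 - pmin T p (sub e n) (A1 \<union> R1 \<union> An \<union> Rn))) + \<epsilon>"
proof -
  obtain P where P: "interp (M \<union> R1 \<union> Rn) p P" "\<forall>X\<in>sub e n. forbids (M \<union> R1 \<union> Rn) P X"
    "ev_prob (M \<union> R1 \<union> Rn) P (\<lambda>w. A1 \<union> R1 \<subseteq> w) \<le> 1 - frechet p b1"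
    "ev_prob (M \<union> R1 \<union> Rn) P (\<lambda>w. An \<union> Rn \<subseteq> w) \<le> 1 - frechet p bn"
    "ev_prob (M \<union> R1 \<union> Rn) P (\<lambda>w. A1 \<union> R1 \<union> (An \<union> Rn) \<subseteq> w)
       \<le> max 0 (pmin T p (sub e n) (A1 \<union> An) + frechet p (R1 \<union> Rn) - 1) + \<epsilon>"
    by (rule exists_glued_ear_rests[OF eps])
  obtain P' where P': "interp (M \<union> R1 \<union> Rn \<union> b1) p P'"
    "\<forall>X\<in>insert (e 1) (sub e n). forbids (M \<union> R1 \<union> Rn \<union> b1) P' X"
    "ev_prob (M \<union> R1 \<union> Rn \<union> b1) P' (\<lambda>w. An \<union> Rn \<subseteq> w) = ev_prob (M \<union> R1 \<union> Rn) P (\<lambda>w. An \<union> Rn \<subseteq> w)"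
    "ev_prob (M \<union> R1 \<union> Rn \<union> b1) P' (\<lambda>w. b1 \<subseteq> w \<and> \<not> An \<union> Rn \<subseteq> w)
       \<le> max 0 (frechet p b1 - ev_prob (M \<union> R1 \<union> Rn) P (\<lambda>w. An \<union> Rn \<subseteq> w)
                + ev_prob (M \<union> R1 \<union> Rn) P (\<lambda>w. A1 \<union> R1 \<union> (An \<union> Rn) \<subseteq> w))"
    by (rule glue_b1[OF P(1-3)])
  obtain Q where Q: "feasible T p H Q"
    "ev_prob T Q (\<lambda>w. b1 \<union> bn \<subseteq> w) \<le> max 0 (frechet p bn - 1 + ev_prob (M \<union> R1 \<union> Rn \<union> b1) P' (\<lambda>w. An \<union> Rn \<subseteq> w)
       + ev_prob (M \<union> R1 \<union> Rn \<union> b1) P' (\<lambda>w. b1 \<subseteq> w \<and> \<not> An \<union> Rn \<subseteq> w))"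
    using glue_bn[OF P'(1,2)] P'(3) P(4) by auto
  have "ev_prob T Q (\<lambda>w. b1 \<union> bn \<subseteq> w)
    \<le> max 0 (frechet p b1 + frechet p bn - (1 - max 0 (pmin T p (sub e n) (A1 \<union> An) + frechet p (R1 \<union> Rn) - 1))) + \<epsilon>"
    using order_trans[OF Q(2)[unfolded P'(3)] ears_upper_arith[OF P'(4) P(5) P(4) eps]] .
  then show ?thesis using Q(1) pmin_inner by auto
qed

lemma pmin_ears:
  "pmin T p H (b1 \<union> bn) = max 0 (frechet p b1 + frechet p bn - (1 - pmin T p (sub e n) (A1 \<union> R1 \<union> An \<union> Rn)))"
proof (rule antisym)
  show "pmin T p H (b1 \<union> bn) \<le> max 0 (frechet p b1 + frechet p bn - (1 - pmin T p (sub e n) (A1 \<union> R1 \<union> An \<union> Rn)))"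
    by (rule pmin_le_approx) (rule exists_feasible_ears_upper)
  obtain Q0 where "feasible T p H Q0" using consistent by blast
  then show "max 0 (frechet p b1 + frechet p bn - (1 - pmin T p (sub e n) (A1 \<union> R1 \<union> An \<union> Rn))) \<le> pmin T p H (b1 \<union> bn)"
  proof (rule pmin_ge)
    fix Q assume Q: "feasible T p H Q"
    then have "0 \<le> ev_prob T Q (\<lambda>w. b1 \<union> bn \<subseteq> w)"
      unfolding feasible_def by (blast intro: ev_prob_nonneg interp_pdist)
    then show "max 0 (frechet p b1 + frechet p bn - (1 - pmin T p (sub e n) (A1 \<union> R1 \<union> An \<union> Rn)))
        \<le> ev_prob T Q (\<lambda>w. b1 \<union> bn \<subseteq> w)"
      using frechet_ears_le_ev_prob[OF Q] by simp
  qed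
qed

end

lemma feasible_conflict_hg: "model T p viol Q \<Longrightarrow> feasible T p (conflict_hg T viol) Q"
  unfolding model_def feasible_def forbids_def conflict_hg_def by blast

theorem lemma3:
  fixes T :: "'a set" and p :: "'a \<Rightarrow> real" and viol :: "'a set \<Rightarrow> bool"
    and e :: "nat \<Rightarrow> 'a set" and n :: nat and b1 bn :: "'a set"
  assumes "pdb T p"
    and "denial T viol"
    and "satisfies T p viol"
    and "is_chain (conflict_hg T viol) e n"
    and "n > 1"
    and "b1 \<subseteq> ears e n 1"
    and "bn \<subseteq> ears e n n"
  shows "pmin T p (conflict_hg T viol) (b1 \<union> bn) =
           max 0 (pmin T p {} b1 + pmin T p {} bn
             - (1 - pmin T p (sub e n)
                      (alpha e 1 \<union> (ears e n 1 - b1) \<union> alpha e (n - 1) \<union> (ears e n n - bn))))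
       \<and> pmin T p (sub e n)
           (alpha e 1 \<union> (ears e n 1 - b1) \<union> alpha e (n - 1) \<union> (ears e n n - bn)) =
         max 0 (pmin T p (sub e n) (alpha e 1 \<union> alpha e (n - 1))
                + pmin T p {} ((ears e n 1 - b1) \<union> (ears e n n - bn)) - 1)
       \<and> (\<forall>\<gamma>. \<gamma> \<subseteq> T \<longrightarrow>
           pmin T p {} \<gamma> = max 0 ((\<Sum>t\<in>\<gamma>. p t) - real (card \<gamma>) + 1))"
proof -
  interpret pdb_chain T p "conflict_hg T viol" e n b1 bn
  proof
    show "\<exists>Q. feasible T p (conflict_hg T viol) Q"
      using assms(3) feasible_conflict_hg unfolding satisfies_def by blast
    show "\<forall>X\<in>conflict_hg T viol. X \<subseteq> T" unfolding conflict_hg_def by blast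
  qed (use assms in auto)
  have pmin_frechet: "\<And>\<gamma>. \<gamma> \<subseteq> T \<Longrightarrow> pmin T p {} \<gamma> = frechet p \<gamma>"
    by (rule pmin_empty_eq_frechet[OF finite_T prob])
  have "R1 \<union> Rn \<subseteq> T" using B1_T Bn_T by blast
  then show ?thesis
    using pmin_ears pmin_inner pmin_frechet[OF b1_T] pmin_frechet[OF bn_T] pmin_frechet[of "R1 \<union> Rn"]
      pmin_frechet[unfolded frechet_def] by simp
qed

end
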